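(* Let $\mathbb{S}=\{1,2,\ldots,N\}$ with $N\in\mathbb{N}\cup\{\infty\}$ and for each $z\in\mathbb{R}^d$ let $Q(z)=(q_{ij}(z))_{i,j\in\mathbb{S}}$ be a transition rate matrix. Assume (A2): for each $z$, $Q(z)$ is conservative and irreducible, and $\sup_{i\in\mathbb{S}}\sum_{j\neq i}\sup_{z\in\mathbb{R}^d}q_{ij}(z)<\infty$. Then for every $x,y\in\mathbb{R}^d$ and every $i_0\in\mathbb{S}$ there is a coupling $(Y_t^x,\tilde Y_t^y)_{t\ge0}$, where $Y^x$ is a continuous-time Markov chain with transition rate matrix $Q(x)$ and $\tilde Y^y$ is a continuous-time Markov chain with transition rate matrix $Q(y)$, both started at $i_0$, such that $$\frac1t\int_0^t\mathbb{P}(Y_s^x\ne\tilde Y_s^y)\,ds\le t\,\|Q(x)-Q(y)\|_{\ell_1},\qquad t>0,$$ where $\|Q(x)-Q(y)\|_{\ell_1}=\sup_{i\in\mathbb{S}}\sum_{j\ne i}|q_{ij}(x)-q_{ij}(y)|$.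
   Context: Conservative means $q_{ij}(z)\ge0$ for $i\ne j$ and $\sum_j q_{ij}(z)=0$. *)

theory Defs
  imports "HOL-Probability.Probability" "HOL-Library.Extended_Nat"
begin

definition state_space :: "enat \<Rightarrow> nat set" where
  "state_space N = {i. 1 \<le> i \<and> enat i \<le> N}"

definition conservative :: "nat set \<Rightarrow> (nat \<Rightarrow> nat \<Rightarrow> real) \<Rightarrow> bool" where
  "conservative S q \<longleftrightarrow>
     (\<forall>i\<in>S. \<forall>j\<in>S. i \<noteq> j \<longrightarrow> q i j \<ge> 0) \<and>
     (\<forall>i\<in>S. ((\<lambda>j. q i j) has_sum 0) S)"

definition irreducible_Q :: "nat set \<Rightarrow> (nat \<Rightarrow> nat \<Rightarrow> real) \<Rightarrow> bool" where
  "irreducible_Q S q \<longleftrightarrow>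
     (\<forall>i\<in>S. \<forall>j\<in>S. (i, j) \<in> {(a, b). a \<in> S \<and> b \<in> S \<and> a \<noteq> b \<and> q a b > 0}\<^sup>*)"

definition uniformly_bounded_rates ::
    "nat set \<Rightarrow> ('z \<Rightarrow> nat \<Rightarrow> nat \<Rightarrow> real) \<Rightarrow> bool" where
  "uniformly_bounded_rates S Q \<longleftrightarrow>
     (SUP i\<in>S. \<integral>\<^sup>+ j. (SUP z. ennreal (Q z i j)) \<partial>count_space (S - {i})) < \<infinity>"

definition Q_dist :: "nat set \<Rightarrow> (nat \<Rightarrow> nat \<Rightarrow> real) \<Rightarrow> (nat \<Rightarrow> nat \<Rightarrow> real) \<Rightarrow> real" where
  "Q_dist S q q' = (SUP i\<in>S. \<Sum>\<^sub>\<infinity> j\<in>S - {i}. \<bar>q i j - q' i j\<bar>)"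

definition transition_function ::
    "nat set \<Rightarrow> (nat \<Rightarrow> nat \<Rightarrow> real) \<Rightarrow> (nat \<Rightarrow> nat \<Rightarrow> real \<Rightarrow> real) \<Rightarrow> bool" where
  "transition_function S q p \<longleftrightarrow>
     (\<forall>i\<in>S. \<forall>j\<in>S. \<forall>t\<ge>0. p i j t \<ge> 0) \<and>
     (\<forall>i\<in>S. \<forall>t\<ge>0. ((\<lambda>j. p i j t) has_sum 1) S) \<and>
     (\<forall>i\<in>S. \<forall>j\<in>S. \<forall>s\<ge>0. \<forall>t\<ge>0.
        ((\<lambda>k. p i k s * p k j t) has_sum p i j (s + t)) S) \<and>
     (\<forall>i\<in>S. \<forall>j\<in>S. p i j 0 = (if i = j then 1 else 0)) \<and>
     (\<forall>i\<in>S. \<forall>j\<in>S. (p i j has_real_derivative q i j) (at_right 0))"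

definition is_ctmc ::
    "'w measure \<Rightarrow> nat set \<Rightarrow> (nat \<Rightarrow> nat \<Rightarrow> real) \<Rightarrow> nat \<Rightarrow> (real \<Rightarrow> 'w \<Rightarrow> nat) \<Rightarrow> bool" where
  "is_ctmc M S q i0 Y \<longleftrightarrow>
     prob_space M \<and>
     (\<forall>t\<ge>0. Y t \<in> measurable M (count_space UNIV)) \<and>
     (\<forall>\<omega>\<in>space M. \<forall>t\<ge>0. Y t \<omega> \<in> S) \<and>
     (\<forall>\<omega>\<in>space M. \<forall>t\<ge>0. \<exists>e>0. \<forall>s. t \<le> s \<and> s < t + e \<longrightarrow> Y s \<omega> = Y t \<omega>) \<and>
     (\<exists>p. transition_function S q p \<and>
        (\<forall>(n::nat) (ts::nat \<Rightarrow> real) (js::nat \<Rightarrow> nat).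
           ts 0 = 0 \<longrightarrow> (\<forall>k<n. ts k < ts (Suc k)) \<longrightarrow> (\<forall>k\<le>n. js k \<in> S) \<longrightarrow>
           measure M {\<omega>\<in>space M. \<forall>k\<le>n. Y (ts k) \<omega> = js k} =
             (if js 0 = i0 then 1 else 0) *
             (\<Prod>k<n. p (js k) (js (Suc k)) (ts (Suc k) - ts k))))"

end

theory Submission
  imports Defs
begin

text \<open>
  Uniformization. Fix \<open>\<lambda>\<close> larger than every off-diagonal row sum of every \<open>Q z\<close>, and drive
  both chains by one i.i.d. sequence of ticks (an \<open>Exp(\<lambda>)\<close> holding time and a uniform mark
  \<open>u \<in> [0,1]\<close>). At a tick the chain in state \<open>i\<close> jumps to \<open>j\<close> when \<open>u\<close> falls into a block of
  length \<open>q\<^sub>i\<^sub>j/\<lambda>\<close>; the blocks are arranged so that the two rows share blocks of length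
  \<open>min(q\<^sub>i\<^sub>j(x), q\<^sub>i\<^sub>j(y))/\<lambda>\<close>, and so two chains in the same state separate at a tick with
  probability at most \<open>\<parallel>Q(x) - Q(y)\<parallel>/\<lambda>\<close>. Each chain is Markov with rate matrix \<open>q\<close>, since by
  memorylessness the noise seen from any time is again the same i.i.d. sequence.

  For \<open>G(s) = \<P>(Y\<^sub>s \<noteq> Y'\<^sub>s)\<close> the Markov property of the pair gives
  \<open>G(s + r) \<le> G(s) + r \<parallel>Q(x) - Q(y)\<parallel> + (\<lambda> r)\<^sup>2\<close>; splitting \<open>[0, s]\<close> into \<open>m\<close> pieces and
  letting \<open>m \<rightarrow> \<infinity>\<close> yields \<open>G(s) \<le> s \<parallel>Q(x) - Q(y)\<parallel>\<close>, and averaging over \<open>[0, t]\<close> gives the claim.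
\<close>

section \<open>The driving noise\<close>

text \<open>Exponential samples are positive almost surely; forcing positivity everywhere makes the
  jump times of every path strictly increasing.\<close>
definition holding :: "real \<Rightarrow> real" where
  "holding x = (if 0 < x then x else 1)"

lemma holding_pos: "0 < holding x"
  by (simp add: holding_def)

lemma holding_measurable[measurable]: "holding \<in> borel_measurable borel"
  unfolding holding_def by measurable

definition exp_time :: "real \<Rightarrow> real measure" where
  "exp_time lam = density lborel (exponential_density lam)"

definition unif_mark :: "real measure" where
  "unif_mark = uniform_measure lborel {0..1}"

definition tick :: "real \<Rightarrow> (real \<times> real) measure" where
  "tick lam = exp_time lam \<Otimes>\<^sub>M unif_mark"

definition noise :: "real \<Rightarrow> (real \<times> real) stream measure" where
  "noise lam = stream_space (tick lam)"

lemma sets_exp_time[simp, measurable_cong]: "sets (exp_time lam) = sets borel"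
  by (simp add: exp_time_def)

lemma space_exp_time[simp]: "space (exp_time lam) = UNIV"
  by (simp add: exp_time_def)

lemma sets_unif_mark[simp, measurable_cong]: "sets unif_mark = sets borel"
  by (simp add: unif_mark_def)

lemma space_unif_mark[simp]: "space unif_mark = UNIV"
  by (simp add: unif_mark_def)

lemma sets_tick[simp, measurable_cong]: "sets (tick lam) = sets (borel \<Otimes>\<^sub>M borel)"
  unfolding tick_def by (rule sets_pair_measure_cong) simp_all

lemma space_tick[simp]: "space (tick lam) = UNIV"
  by (simp add: tick_def space_pair_measure)

lemma space_noise[simp]: "space (noise lam) = UNIV"
  by (simp add: noise_def space_stream_space)

lemma sets_noise[measurable_cong]: "sets (noise lam) = sets (stream_space (borel \<Otimes>\<^sub>M borel))"
  unfolding noise_def by (rule sets_stream_space_cong) simp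

lemma sets_Collect_noise: "Measurable.pred (noise l) P \<Longrightarrow> {\<omega>. P \<omega>} \<in> sets (noise l)"
  by (simp add: pred_def)

lemma UNIV_in_sets_noise[measurable]: "UNIV \<in> sets (noise l)"
  using sets.top[of "noise l"] by simp

lemma measure_unif_mark: "B \<in> sets borel \<Longrightarrow> measure unif_mark B = measure lborel ({0..1} \<inter> B)"
  unfolding unif_mark_def measure_def
  by (subst emeasure_uniform_measure) (auto simp: divide_ennreal_def)

locale uniformization =
  fixes lam :: real
  assumes lam_pos: "0 < lam"
begin

sublocale Exp: prob_space "exp_time lam"
  unfolding exp_time_def using lam_pos by (rule prob_space_exponential_density)

sublocale Unif: prob_space unif_mark
  unfolding unif_mark_def by (rule prob_space_uniform_measure) auto

sublocale Tick: pair_prob_space "exp_time lam" unif_mark ..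

lemma prob_space_tick: "prob_space (tick lam)"
  unfolding tick_def by unfold_locales

sublocale Noise: prob_space "noise lam"
  unfolding noise_def using prob_space_tick by (rule prob_space.prob_space_stream_space)

lemma nn_integral_noise:
  assumes "f \<in> borel_measurable (noise lam)"
  shows "(\<integral>\<^sup>+\<omega>. f \<omega> \<partial>noise lam) = (\<integral>\<^sup>+x. (\<integral>\<^sup>+\<omega>. f (x ## \<omega>) \<partial>noise lam) \<partial>tick lam)"
  using prob_space.nn_integral_stream_space[OF prob_space_tick, of f] assms
  unfolding noise_def by simp

lemma exp_time_memoryless:
  assumes f[measurable]: "f \<in> borel_measurable borel" and t: "0 \<le> t"
  shows "(\<integral>\<^sup>+x. indicator {t<..} (holding x) * f (holding x - t) \<partial>exp_time lam)
    = ennreal (exp (- lam * t)) * (\<integral>\<^sup>+x. f x \<partial>exp_time lam)"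
proof -
  have "(\<integral>\<^sup>+x. indicator {t<..} (holding x) * f (holding x - t) \<partial>exp_time lam)
      = (\<integral>\<^sup>+x. ennreal (exponential_density lam x) * (indicator {t<..} (holding x) * f (holding x - t)) \<partial>lborel)"
    unfolding exp_time_def by (subst nn_integral_density) auto
  also have "\<dots> = (\<integral>\<^sup>+x. ennreal (exponential_density lam x) * (indicator {t<..} x * f (x - t)) \<partial>lborel)"
    using t by (intro nn_integral_cong_AE, use AE_lborel_singleton[of 0] in eventually_elim)
      (auto simp: holding_def exponential_density_def split: split_indicator)
  also have "\<dots> = (\<integral>\<^sup>+x. ennreal (exponential_density lam (t + x)) * (indicator {t<..} (t + x) * f x) \<partial>lborel)"
    using nn_integral_real_affine[of "\<lambda>x. ennreal (exponential_density lam x) * (indicator {t<..} x * f (x - t))" 1 t]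
    by simp
  also have "\<dots> = (\<integral>\<^sup>+x. ennreal (exp (- lam * t)) * (ennreal (exponential_density lam x) * f x) \<partial>lborel)"
  proof (intro nn_integral_cong_AE, use AE_lborel_singleton[of 0] in eventually_elim)
    fix x :: real assume "x \<noteq> 0"
    show "ennreal (exponential_density lam (t + x)) * (indicator {t<..} (t + x) * f x) =
          ennreal (exp (- lam * t)) * (ennreal (exponential_density lam x) * f x)"
    proof (cases "0 < x")
      case True
      have "exponential_density lam (t + x) = exp (- lam * t) * exponential_density lam x"
        using True t by (simp add: exponential_density_def algebra_simps flip: exp_add)
      then show ?thesis using True t lam_pos
        by (simp add: ennreal_mult' mult.assoc exponential_density_nonneg)
    next
      case False
      then show ?thesis using \<open>x \<noteq> 0\<close> by (simp add: exponential_density_def)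
    qed
  qed
  also have "\<dots> = ennreal (exp (- lam * t)) * (\<integral>\<^sup>+x. f x \<partial>exp_time lam)"
    unfolding exp_time_def by (subst nn_integral_cmult) (auto simp: nn_integral_density)
  finally show ?thesis .
qed

lemma nn_integral_tick_memoryless:
  assumes g[measurable]: "g \<in> borel_measurable (borel \<Otimes>\<^sub>M borel)" and t: "0 \<le> t"
  shows "(\<integral>\<^sup>+x. indicator {t<..} (holding (fst x)) * g (holding (fst x) - t, snd x) \<partial>tick lam)
    = ennreal (exp (- lam * t)) * (\<integral>\<^sup>+x. g x \<partial>tick lam)"
proof -
  have "(\<integral>\<^sup>+x. indicator {t<..} (holding (fst x)) * g (holding (fst x) - t, snd x) \<partial>tick lam)
      = (\<integral>\<^sup>+b. \<integral>\<^sup>+a. indicator {t<..} (holding a) * g (holding a - t, b) \<partial>exp_time lam \<partial>unif_mark)"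
    unfolding tick_def by (subst Tick.nn_integral_snd[symmetric]) auto
  also have "\<dots> = (\<integral>\<^sup>+b. ennreal (exp (- lam * t)) * \<integral>\<^sup>+a. g (a, b) \<partial>exp_time lam \<partial>unif_mark)"
    by (intro nn_integral_cong exp_time_memoryless t) measurable
  also have "\<dots> = ennreal (exp (- lam * t)) * (\<integral>\<^sup>+b. \<integral>\<^sup>+a. g (a, b) \<partial>exp_time lam \<partial>unif_mark)"
    by (rule nn_integral_cmult) measurable
  also have "(\<integral>\<^sup>+b. \<integral>\<^sup>+a. g (a, b) \<partial>exp_time lam \<partial>unif_mark) = (\<integral>\<^sup>+x. g x \<partial>tick lam)"
    unfolding tick_def by (subst Tick.nn_integral_snd) auto
  finally show ?thesis .
qed

end


section \<open>Paths driven by the noise\<close>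

definition jump_time :: "(real \<times> real) stream \<Rightarrow> nat \<Rightarrow> real" where
  "jump_time \<omega> n = (\<Sum>l<n. holding (fst (\<omega> !! l)))"

fun skeleton :: "('a \<Rightarrow> real \<Rightarrow> 'a) \<Rightarrow> 'a \<Rightarrow> (real \<times> real) stream \<Rightarrow> nat \<Rightarrow> 'a" where
  "skeleton F i \<omega> 0 = i"
| "skeleton F i \<omega> (Suc n) = skeleton F (F i (snd (shd \<omega>))) (stl \<omega>) n"

text \<open>\<open>F i u\<close> is the state entered from \<open>i\<close> at a tick with mark \<open>u\<close> (possibly \<open>i\<close> itself).
  The state \<open>c\<close> is a junk value for times after an explosion, which is a null event
  (\<open>AE_not_explosive\<close>).\<close>
definition chain_path :: "('a \<Rightarrow> real \<Rightarrow> 'a) \<Rightarrow> 'a \<Rightarrow> 'a \<Rightarrow> (real \<times> real) stream \<Rightarrow> real \<Rightarrow> 'a" where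
  "chain_path F c i \<omega> t =
    (if \<exists>n. jump_time \<omega> n \<le> t \<and> t < jump_time \<omega> (Suc n)
     then skeleton F i \<omega> (LEAST n. t < jump_time \<omega> (Suc n)) else c)"

text \<open>The noise as seen from a time \<open>s\<close> in the \<open>n\<close>-th holding interval: the residual holding
  time, followed by the future ticks.\<close>
definition restart :: "nat \<Rightarrow> real \<Rightarrow> (real \<times> real) stream \<Rightarrow> (real \<times> real) stream" where
  "restart n s \<omega> = (jump_time \<omega> (Suc n) - s, snd (\<omega> !! n)) ## sdrop (Suc n) \<omega>"

lemma jump_time_0[simp]: "jump_time \<omega> 0 = 0"
  by (simp add: jump_time_def)

lemma jump_time_Suc: "jump_time \<omega> (Suc n) = jump_time \<omega> n + holding (fst (\<omega> !! n))"
  by (simp add: jump_time_def)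

lemma jump_time_SCons_Suc: "jump_time (x ## \<omega>) (Suc n) = holding (fst x) + jump_time \<omega> n"
  unfolding jump_time_def by (subst sum.lessThan_Suc_shift) simp

lemma jump_time_nonneg: "0 \<le> jump_time \<omega> n"
  unfolding jump_time_def by (intro sum_nonneg) (simp add: less_imp_le holding_pos)

lemma strict_mono_jump_time: "strict_mono (jump_time \<omega>)"
  by (rule strict_monoI_Suc) (simp add: jump_time_Suc holding_pos)

lemma jump_time_less_iff[simp]: "jump_time \<omega> m < jump_time \<omega> n \<longleftrightarrow> m < n"
  using strict_mono_jump_time strict_mono_less by blast

lemma jump_time_le_iff[simp]: "jump_time \<omega> m \<le> jump_time \<omega> n \<longleftrightarrow> m \<le> n"
  using strict_mono_jump_time strict_mono_less_eq by blast

lemma holding_interval_unique: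
  assumes "jump_time \<omega> m \<le> s" "s < jump_time \<omega> (Suc m)"
    and "jump_time \<omega> m' \<le> s" "s < jump_time \<omega> (Suc m')"
  shows "m = m'"
proof -
  have "jump_time \<omega> m < jump_time \<omega> (Suc m')" "jump_time \<omega> m' < jump_time \<omega> (Suc m)"
    using assms by linarith+
  then show ?thesis by simp
qed

lemma holding_interval_exists:
  assumes "0 \<le> t" "t < jump_time \<omega> m"
  obtains n where "jump_time \<omega> n \<le> t" "t < jump_time \<omega> (Suc n)"
proof -
  define n where "n = (LEAST n. t < jump_time \<omega> n)"
  have n: "t < jump_time \<omega> n"
    unfolding n_def by (rule LeastI[of _ m]) (rule assms)
  have "n \<noteq> 0" using n assms(1) by (metis jump_time_0 not_less)
  then obtain k where k: "n = Suc k" by (cases n) auto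
  have "\<not> t < jump_time \<omega> k"
    using Least_le[of "\<lambda>n. t < jump_time \<omega> n" k] unfolding n_def[symmetric] k by auto
  then show ?thesis using that n k by (auto simp: not_less)
qed

lemma chain_path_eq_skeleton:
  assumes "jump_time \<omega> n \<le> t" "t < jump_time \<omega> (Suc n)"
  shows "chain_path F c i \<omega> t = skeleton F i \<omega> n"
proof -
  have "(LEAST m. t < jump_time \<omega> (Suc m)) = n"
  proof (rule Least_equality)
    fix m assume "t < jump_time \<omega> (Suc m)"
    with assms(1) have "jump_time \<omega> n < jump_time \<omega> (Suc m)" by linarith
    then show "n \<le> m" by simp
  qed (use assms in auto)
  then show ?thesis using assms unfolding chain_path_def by auto
qed

lemma chain_path_0: "chain_path F c i \<omega> 0 = i"
  using chain_path_eq_skeleton[of \<omega> 0 0] by (simp add: jump_time_Suc holding_pos)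

lemma chain_path_in:
  assumes "\<And>i u. i \<in> S \<Longrightarrow> F i u \<in> S" "i \<in> S" "c \<in> S"
  shows "chain_path F c i \<omega> t \<in> S"
proof -
  have "skeleton F i \<omega> n \<in> S" for n
    using assms(2) by (induction n arbitrary: i \<omega>) (auto intro: assms(1))
  then show ?thesis unfolding chain_path_def using assms(3) by auto
qed

lemma chain_path_exploded:
  assumes "\<nexists>n. jump_time \<omega> n \<le> t \<and> t < jump_time \<omega> (Suc n)"
  shows "chain_path F c i \<omega> t = c"
  unfolding chain_path_def using assms by (rule if_not_P)

lemma skeleton_pair:
  "skeleton (\<lambda>(a, b) u. (F a u, G b u)) (i, j) \<omega> n = (skeleton F i \<omega> n, skeleton G j \<omega> n)"
  by (induction n arbitrary: i j \<omega>) auto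

lemma chain_path_pair:
  "chain_path (\<lambda>(a, b) u. (F a u, G b u)) (c, c') (i, j) \<omega> t = (chain_path F c i \<omega> t, chain_path G c' j \<omega> t)"
proof (cases "\<exists>n. jump_time \<omega> n \<le> t \<and> t < jump_time \<omega> (Suc n)")
  case True
  then obtain n where n: "jump_time \<omega> n \<le> t" "t < jump_time \<omega> (Suc n)" by blast
  show ?thesis
    unfolding chain_path_eq_skeleton[OF n] by (rule skeleton_pair)
next
  case False
  show ?thesis by (simp only: chain_path_exploded[OF False])
qed

lemma chain_path_right_const:
  assumes "0 \<le> t"
  shows "\<exists>e>0. \<forall>s. t \<le> s \<and> s < t + e \<longrightarrow> chain_path F c i \<omega> s = chain_path F c i \<omega> t"
proof (cases "\<exists>n. jump_time \<omega> n \<le> t \<and> t < jump_time \<omega> (Suc n)")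
  case True
  then obtain n where n: "jump_time \<omega> n \<le> t" "t < jump_time \<omega> (Suc n)" by blast
  have "chain_path F c i \<omega> s = skeleton F i \<omega> n" if "t \<le> s" "s < jump_time \<omega> (Suc n)" for s
    using n that by (intro chain_path_eq_skeleton) auto
  moreover have "chain_path F c i \<omega> t = skeleton F i \<omega> n"
    using n by (rule chain_path_eq_skeleton)
  ultimately show ?thesis using n(2) by (intro exI[of _ "jump_time \<omega> (Suc n) - t"]) auto
next
  case False
  have "chain_path F c i \<omega> s = c" if "t \<le> s" for s
  proof (rule chain_path_exploded, rule notI)
    assume "\<exists>n. jump_time \<omega> n \<le> s \<and> s < jump_time \<omega> (Suc n)"
    then obtain n where "s < jump_time \<omega> (Suc n)" by blast
    with that have "t < jump_time \<omega> (Suc n)" by linarith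
    then obtain m where "jump_time \<omega> m \<le> t" "t < jump_time \<omega> (Suc m)"
      using assms holding_interval_exists by blast
    then show False using False by blast
  qed
  then show ?thesis by (intro exI[of _ 1]) auto
qed

lemma jump_time_restart:
  assumes "s < jump_time \<omega> (Suc n)"
  shows "jump_time (restart n s \<omega>) (Suc m) = jump_time \<omega> (Suc n + m) - s"
proof (induction m)
  case 0
  then show ?case using assms by (simp add: restart_def jump_time_SCons_Suc holding_def)
next
  case (Suc m)
  have "restart n s \<omega> !! Suc m = \<omega> !! (Suc n + m)"
    by (simp add: restart_def sdrop_snth)
  then show ?case using Suc by (simp add: jump_time_Suc)
qed

lemma skeleton_restart: "skeleton F (skeleton F i \<omega> n) (restart n s \<omega>) m = skeleton F i \<omega> (n + m)"
proof (cases m)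
  case (Suc k)
  have shift: "skeleton F i \<omega> (n + m) = skeleton F (skeleton F i \<omega> n) (sdrop n \<omega>) m" for m
    by (induction n arbitrary: i \<omega>) auto
  have "skeleton F i \<omega> (n + Suc k) = skeleton F (F (skeleton F i \<omega> n) (snd (\<omega> !! n))) (sdrop (Suc n) \<omega>) k"
    by (simp only: shift skeleton.simps sdrop_simps sdrop.simps)
  then show ?thesis using Suc by (simp add: restart_def)
qed simp

lemma holding_interval_restart:
  assumes t: "0 \<le> t" and n: "jump_time \<omega> n \<le> s" "s < jump_time \<omega> (Suc n)"
  shows "jump_time (restart n s \<omega>) k \<le> t \<and> t < jump_time (restart n s \<omega>) (Suc k) \<longleftrightarrow>
    jump_time \<omega> (n + k) \<le> s + t \<and> s + t < jump_time \<omega> (Suc (n + k))"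
  using jump_time_restart[OF n(2), of k] jump_time_restart[OF n(2), of "k - 1"] n t
  by (cases k) auto

lemma ex_holding_interval_restart:
  assumes t: "0 \<le> t" and n: "jump_time \<omega> n \<le> s" "s < jump_time \<omega> (Suc n)"
  shows "(\<exists>m. jump_time \<omega> m \<le> s + t \<and> s + t < jump_time \<omega> (Suc m)) \<longleftrightarrow>
    (\<exists>k. jump_time (restart n s \<omega>) k \<le> t \<and> t < jump_time (restart n s \<omega>) (Suc k))"
proof
  assume "\<exists>m. jump_time \<omega> m \<le> s + t \<and> s + t < jump_time \<omega> (Suc m)"
  then obtain m where m: "jump_time \<omega> m \<le> s + t" "s + t < jump_time \<omega> (Suc m)" by blast
  have "n \<le> m"
  proof (rule ccontr)
    assume "\<not> n \<le> m"
    then have "jump_time \<omega> (Suc m) \<le> jump_time \<omega> n" by simp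
    then show False using m n t by linarith
  qed
  then show "\<exists>k. jump_time (restart n s \<omega>) k \<le> t \<and> t < jump_time (restart n s \<omega>) (Suc k)"
    unfolding holding_interval_restart[OF assms] using m by (intro exI[of _ "m - n"]) simp
qed (auto simp: holding_interval_restart[OF assms])

lemma chain_path_restart:
  assumes t: "0 \<le> t" and n: "jump_time \<omega> n \<le> s" "s < jump_time \<omega> (Suc n)"
  shows "chain_path F c i \<omega> (s + t) = chain_path F c (skeleton F i \<omega> n) (restart n s \<omega>) t"
proof (cases "\<exists>k. jump_time (restart n s \<omega>) k \<le> t \<and> t < jump_time (restart n s \<omega>) (Suc k)")
  case True
  then obtain k where k: "jump_time (restart n s \<omega>) k \<le> t" "t < jump_time (restart n s \<omega>) (Suc k)" by blast
  have "chain_path F c i \<omega> (s + t) = skeleton F i \<omega> (n + k)"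
    using k holding_interval_restart[OF assms, of k] by (intro chain_path_eq_skeleton) auto
  also have "\<dots> = skeleton F (skeleton F i \<omega> n) (restart n s \<omega>) k"
    by (rule skeleton_restart[symmetric])
  also have "\<dots> = chain_path F c (skeleton F i \<omega> n) (restart n s \<omega>) t"
    using k by (rule chain_path_eq_skeleton[symmetric])
  finally show ?thesis .
next
  case False
  then have "chain_path F c (skeleton F i \<omega> n) (restart n s \<omega>) t = c"
    by (rule chain_path_exploded)
  moreover have "chain_path F c i \<omega> (s + t) = c"
    using False ex_holding_interval_restart[OF assms] by (intro chain_path_exploded) blast
  ultimately show ?thesis by simp
qed

lemma chain_path_at_most_one_tick:
  assumes "0 \<le> t" "t < holding (fst (shd \<omega>)) + holding (fst (shd (stl \<omega>)))"
  shows "chain_path F c i \<omega> t = (if holding (fst (shd \<omega>)) \<le> t then F i (snd (shd \<omega>)) else i)"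
  using assms chain_path_eq_skeleton[of \<omega> 0 t F c i] chain_path_eq_skeleton[of \<omega> 1 t F c i]
  by (simp add: jump_time_def not_le)

lemma jump_time_measurable[measurable]: "(\<lambda>\<omega>. jump_time \<omega> n) \<in> borel_measurable (noise l)"
  unfolding jump_time_def by measurable

lemma skeleton_measurable[measurable]:
  fixes F :: "'a::countable \<Rightarrow> real \<Rightarrow> 'a"
  assumes [measurable]: "\<And>i. F i \<in> measurable borel (count_space UNIV)"
  shows "(\<lambda>\<omega>. skeleton F i \<omega> n) \<in> measurable (noise l) (count_space UNIV)"
proof (induction n arbitrary: i)
  case (Suc n)
  have first_jump: "(\<lambda>\<omega>. F i (snd (shd \<omega>))) \<in> measurable (noise l) (count_space UNIV)"
    by measurable
  have "(\<lambda>\<omega>. skeleton F (F i (snd (shd \<omega>))) (stl \<omega>) n) \<in> measurable (noise l) (count_space UNIV)"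
    by (rule measurable_compose_countable[OF _ first_jump])
      (rule measurable_compose[OF _ Suc], unfold noise_def, measurable)
  then show ?case by simp
qed simp

lemma chain_path_measurable[measurable]:
  fixes F :: "'a::countable \<Rightarrow> real \<Rightarrow> 'a"
  assumes [measurable]: "\<And>i. F i \<in> measurable borel (count_space UNIV)"
  shows "(\<lambda>\<omega>. chain_path F c i \<omega> t) \<in> measurable (noise l) (count_space UNIV)"
  unfolding chain_path_def by measurable

lemma restart_measurable[measurable (raw)]:
  assumes [measurable]: "f \<in> borel_measurable N" "g \<in> measurable N (noise l)"
  shows "(\<lambda>x. restart n (f x) (g x)) \<in> measurable N (noise l)"
proof -
  have "(\<lambda>p. restart n (fst p) (snd p)) \<in> measurable (borel \<Otimes>\<^sub>M noise l) (noise l)"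
    unfolding restart_def noise_def by measurable
  from measurable_compose[OF measurable_Pair[OF assms] this] show ?thesis by simp
qed


section \<open>Non-explosion\<close>

context uniformization
begin

lemma nn_integral_exp_neg_jump_time:
  "(\<integral>\<^sup>+\<omega>. ennreal (exp (- jump_time \<omega> n)) \<partial>noise lam) =
    (\<integral>\<^sup>+x. ennreal (exp (- holding (fst x))) \<partial>tick lam) ^ n"
proof (induction n)
  case 0
  then show ?case using Noise.emeasure_space_1 by simp
next
  case (Suc n)
  have "(\<integral>\<^sup>+\<omega>. ennreal (exp (- jump_time \<omega> (Suc n))) \<partial>noise lam)
     = (\<integral>\<^sup>+x. \<integral>\<^sup>+\<omega>. ennreal (exp (- holding (fst x))) * ennreal (exp (- jump_time \<omega> n)) \<partial>noise lam \<partial>tick lam)"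
    by (subst nn_integral_noise)
      (simp_all add: jump_time_SCons_Suc exp_add[symmetric] ennreal_mult[symmetric])
  also have "\<dots> = (\<integral>\<^sup>+x. ennreal (exp (- holding (fst x))) * (\<integral>\<^sup>+\<omega>. ennreal (exp (- jump_time \<omega> n)) \<partial>noise lam) \<partial>tick lam)"
    by (intro nn_integral_cong nn_integral_cmult) measurable
  also have "\<dots> = (\<integral>\<^sup>+x. ennreal (exp (- holding (fst x))) \<partial>tick lam) ^ Suc n"
    unfolding Suc.IH by (subst nn_integral_multc) simp_all
  finally show ?case .
qed

text \<open>From \<open>exp (- h) \<le> 1 - (1 - exp (- 1)) [h > 1]\<close> and \<open>\<P>(h > 1) = exp (- \<lambda>)\<close>.\<close>
lemma nn_integral_exp_neg_holding_le:
  "(\<integral>\<^sup>+x. ennreal (exp (- holding (fst x))) \<partial>tick lam) \<le> ennreal (1 - (1 - exp (- 1)) * exp (- lam))"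
proof -
  define c where "c = 1 - exp (- 1::real)"
  have c: "0 \<le> c" unfolding c_def by simp
  let ?a = "\<integral>\<^sup>+x. ennreal (exp (- holding (fst x))) \<partial>tick lam"
  have "?a + ennreal (c * exp (- lam)) =
      ?a + ennreal c * (\<integral>\<^sup>+x. indicator {1<..} (holding (fst x)) * 1 \<partial>tick lam)"
    using nn_integral_tick_memoryless[of "\<lambda>_. 1" 1] Tick.emeasure_space_1
    by (simp add: ennreal_mult c tick_def space_pair_measure)
  also have "\<dots> = (\<integral>\<^sup>+x. ennreal (exp (- holding (fst x))) + ennreal c * indicator {1<..} (holding (fst x)) \<partial>tick lam)"
    by (subst nn_integral_cmult[symmetric], measurable, subst nn_integral_add) auto
  also have "\<dots> \<le> (\<integral>\<^sup>+x. 1 \<partial>tick lam)"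
  proof (intro nn_integral_mono)
    fix x :: "real \<times> real"
    show "ennreal (exp (- holding (fst x))) + ennreal c * indicator {1<..} (holding (fst x)) \<le> 1"
    proof (cases "1 < holding (fst x)")
      case True
      then have "exp (- holding (fst x)) + c \<le> 1" unfolding c_def by simp
      then show ?thesis using True c by (simp add: ennreal_plus[symmetric] del: ennreal_plus)
    next
      case False
      then show ?thesis by (simp add: holding_pos less_imp_le)
    qed
  qed
  also have "\<dots> = 1" using Tick.emeasure_space_1 by (simp add: tick_def)
  finally have le1: "?a + ennreal (c * exp (- lam)) \<le> 1" .
  then have "?a \<noteq> \<infinity>" by (auto simp: top_unique)
  then obtain a where a: "?a = ennreal a" "0 \<le> a" by (cases ?a) auto
  with le1 have "a + c * exp (- lam) \<le> 1" using c
    by (simp add: ennreal_plus[symmetric] ennreal_le_1 del: ennreal_plus)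
  then show ?thesis using a c_def by simp
qed

lemma emeasure_jump_time_le:
  "emeasure (noise lam) {\<omega>. jump_time \<omega> n \<le> s} \<le> ennreal (exp s * (1 - (1 - exp (- 1)) * exp (- lam)) ^ n)"
proof -
  have "emeasure (noise lam) {\<omega>. jump_time \<omega> n \<le> s} = (\<integral>\<^sup>+\<omega>. indicator {\<omega>. jump_time \<omega> n \<le> s} \<omega> \<partial>noise lam)"
    by (intro nn_integral_indicator[symmetric] sets_Collect_noise) measurable
  also have "\<dots> \<le> (\<integral>\<^sup>+\<omega>. ennreal (exp s) * ennreal (exp (- jump_time \<omega> n)) \<partial>noise lam)"
    by (intro nn_integral_mono)
      (auto simp: ennreal_mult[symmetric] exp_add[symmetric] split: split_indicator)
  also have "\<dots> \<le> ennreal (exp s) * ennreal (1 - (1 - exp (- 1)) * exp (- lam)) ^ n"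
    using nn_integral_exp_neg_holding_le
    by (subst nn_integral_cmult) (auto simp: nn_integral_exp_neg_jump_time intro!: mult_left_mono power_mono)
  also have "\<dots> = ennreal (exp s * (1 - (1 - exp (- 1)) * exp (- lam)) ^ n)"
    using lam_pos by (simp add: ennreal_mult ennreal_power mult_le_one)
  finally show ?thesis .
qed

lemma AE_not_explosive: "AE \<omega> in noise lam. \<exists>n. s < jump_time \<omega> n"
proof -
  define b where "b = 1 - (1 - exp (- 1)) * exp (- lam)"
  have b: "0 \<le> b" "b < 1"
    using lam_pos unfolding b_def by (auto simp: mult_le_one)
  define E where "E = {\<omega>. \<forall>n. jump_time \<omega> n \<le> s}"
  have E[measurable]: "E \<in> sets (noise lam)"
    unfolding E_def by (intro sets_Collect_noise) measurable
  have "measure (noise lam) E \<le> exp s * b ^ n" for n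
  proof -
    have "emeasure (noise lam) E \<le> emeasure (noise lam) {\<omega>. jump_time \<omega> n \<le> s}"
      by (rule emeasure_mono) (auto simp: E_def intro: sets_Collect_noise)
    also have "\<dots> \<le> ennreal (exp s * b ^ n)"
      unfolding b_def by (rule emeasure_jump_time_le)
    finally show ?thesis using b by (simp add: Noise.emeasure_eq_measure)
  qed
  moreover have "(\<lambda>n. exp s * b ^ n) \<longlonglongrightarrow> exp s * 0"
    by (intro tendsto_mult tendsto_const LIMSEQ_power_zero) (use b in auto)
  ultimately have "measure (noise lam) E \<le> exp s * 0"
    using LIMSEQ_le_const by blast
  then have "E \<in> null_sets (noise lam)"
    using E by (simp add: Noise.emeasure_eq_measure null_setsI measure_le_0_iff)
  then show ?thesis
    by (rule AE_I') (auto simp: E_def not_less)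
qed

end

section \<open>The Markov property at a fixed time\<close>

definition restart_event ::
    "('a \<Rightarrow> real \<Rightarrow> 'a) \<Rightarrow> 'a \<Rightarrow> nat \<Rightarrow> 'a \<Rightarrow> real \<Rightarrow> (real \<times> real) stream set \<Rightarrow> (real \<times> real) stream set" where
  "restart_event F k n i t C =
    {\<omega>. jump_time \<omega> n \<le> t \<and> t < jump_time \<omega> (Suc n) \<and> skeleton F i \<omega> n = k \<and> restart n t \<omega> \<in> C}"

lemma restart_event_measurable[measurable]:
  fixes F :: "'a::countable \<Rightarrow> real \<Rightarrow> 'a"
  assumes [measurable]: "\<And>i. F i \<in> measurable borel (count_space UNIV)" "C \<in> sets (noise l)"
  shows "restart_event F k n i t C \<in> sets (noise l)"
  unfolding restart_event_def by (intro sets_Collect_noise) measurable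

lemma disjoint_family_restart_event: "disjoint_family (\<lambda>m. restart_event F k m i s C)"
  unfolding disjoint_family_on_def restart_event_def by (auto dest: holding_interval_unique)

lemma indicator_restart_event_SCons_0:
  assumes "0 \<le> t"
  shows "indicator (restart_event F k 0 i t C) (x ## \<omega>) =
    (indicator {k} i * indicator {t<..} (holding (fst x)) * indicator C ((holding (fst x) - t, snd x) ## \<omega>) :: ennreal)"
proof -
  have "restart 0 t (x ## \<omega>) = (holding (fst x) - t, snd x) ## \<omega>"
    by (simp add: restart_def jump_time_SCons_Suc)
  moreover have "jump_time (x ## \<omega>) (Suc 0) = holding (fst x)"
    using jump_time_SCons_Suc[of x \<omega> 0] by simp
  ultimately show ?thesis
    using assms by (auto simp: restart_event_def split: split_indicator)
qed

lemma indicator_restart_event_SCons_Suc: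
  "indicator (restart_event F k (Suc n) i t C) (x ## \<omega>) =
    (indicator {..t} (holding (fst x)) *
      indicator (restart_event F k n (F i (snd x)) (t - holding (fst x)) C) \<omega> :: ennreal)"
proof -
  have "restart (Suc n) t (x ## \<omega>) = restart n (t - holding (fst x)) \<omega>"
    by (simp add: restart_def jump_time_SCons_Suc)
  then show ?thesis
    using jump_time_nonneg[of \<omega> n]
    by (auto simp: restart_event_def jump_time_SCons_Suc split: split_indicator)
qed

context uniformization
begin

lemma emeasure_restart_event_0:
  fixes F :: "'a::countable \<Rightarrow> real \<Rightarrow> 'a"
  assumes [measurable]: "\<And>i. F i \<in> measurable borel (count_space UNIV)" "C \<in> sets (noise lam)"
    and t: "0 \<le> t"
  shows "emeasure (noise lam) (restart_event F k 0 i t C) =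
    indicator {k} i * ennreal (exp (- lam * t)) * emeasure (noise lam) C"
proof -
  have [measurable]: "C \<in> sets (stream_space (borel \<Otimes>\<^sub>M borel))"
    using assms(2) by (simp add: sets_noise)
  define G where "G y = (\<integral>\<^sup>+\<omega>. indicator C (y ## \<omega>) \<partial>noise lam)" for y
  have G[measurable]: "G \<in> borel_measurable (borel \<Otimes>\<^sub>M borel)"
    unfolding G_def by measurable
  have "emeasure (noise lam) (restart_event F k 0 i t C)
      = (\<integral>\<^sup>+x. \<integral>\<^sup>+\<omega>. indicator (restart_event F k 0 i t C) (x ## \<omega>) \<partial>noise lam \<partial>tick lam)"
    by (subst nn_integral_indicator[symmetric], measurable, rule nn_integral_noise) measurable
  also have "\<dots> = (\<integral>\<^sup>+x. indicator {k} i * indicator {t<..} (holding (fst x)) * G (holding (fst x) - t, snd x) \<partial>tick lam)"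
    unfolding indicator_restart_event_SCons_0[OF t] G_def
    by (intro nn_integral_cong nn_integral_cmult) measurable
  also have "\<dots> = indicator {k} i * (\<integral>\<^sup>+x. indicator {t<..} (holding (fst x)) * G (holding (fst x) - t, snd x) \<partial>tick lam)"
    by (subst nn_integral_cmult[symmetric]) (simp_all add: mult.assoc)
  also have "\<dots> = indicator {k} i * (ennreal (exp (- lam * t)) * (\<integral>\<^sup>+x. G x \<partial>tick lam))"
    by (simp add: nn_integral_tick_memoryless[OF G t])
  also have "(\<integral>\<^sup>+x. G x \<partial>tick lam) = emeasure (noise lam) C"
    unfolding G_def using assms(2)
    by (subst nn_integral_noise[symmetric]) simp_all
  finally show ?thesis by (simp add: mult.assoc)
qed

lemma emeasure_restart_event_Suc:
  fixes F :: "'a::countable \<Rightarrow> real \<Rightarrow> 'a"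
  assumes [measurable]: "\<And>i. F i \<in> measurable borel (count_space UNIV)" "C \<in> sets (noise lam)"
  shows "emeasure (noise lam) (restart_event F k (Suc n) i t C) =
    (\<integral>\<^sup>+x. indicator {..t} (holding (fst x)) *
       emeasure (noise lam) (restart_event F k n (F i (snd x)) (t - holding (fst x)) C) \<partial>tick lam)"
proof -
  have "emeasure (noise lam) (restart_event F k (Suc n) i t C)
      = (\<integral>\<^sup>+x. \<integral>\<^sup>+\<omega>. indicator (restart_event F k (Suc n) i t C) (x ## \<omega>) \<partial>noise lam \<partial>tick lam)"
    by (subst nn_integral_indicator[symmetric], measurable, rule nn_integral_noise) measurable
  then show ?thesis
    unfolding indicator_restart_event_SCons_Suc
    by (simp add: nn_integral_cmult_indicator)
qed

text \<open>Memorylessness: the restarted noise is independent of the past and again distributed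
  as \<open>noise lam\<close>.\<close>
lemma emeasure_restart_event:
  fixes F :: "'a::countable \<Rightarrow> real \<Rightarrow> 'a"
  assumes F[measurable]: "\<And>i. F i \<in> measurable borel (count_space UNIV)"
    and C[measurable]: "C \<in> sets (noise lam)" and t: "0 \<le> t"
  shows "emeasure (noise lam) (restart_event F k n i t C) =
    emeasure (noise lam) (restart_event F k n i t UNIV) * emeasure (noise lam) C"
  using t
proof (induction n arbitrary: i t)
  case 0
  show ?case
    using emeasure_restart_event_0[OF F C 0] emeasure_restart_event_0[OF F _ 0, of UNIV]
      Noise.emeasure_space_1 by simp
next
  case (Suc n)
  let ?E = "\<lambda>x. emeasure (noise lam) (restart_event F k n (F i (snd x)) (t - holding (fst x)) UNIV)"
  have [measurable]: "(\<lambda>x. indicator {..t} (holding (fst x)) * ?E x) \<in> borel_measurable (tick lam)"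
  proof -
    have "(\<lambda>x. \<integral>\<^sup>+\<omega>. indicator (restart_event F k (Suc n) i t UNIV) (x ## \<omega>) \<partial>noise lam) \<in> borel_measurable (tick lam)"
      by measurable
    then show ?thesis
      unfolding indicator_restart_event_SCons_Suc
      by (rule measurable_cong[THEN iffD1, rotated]) (rule nn_integral_cmult_indicator, measurable)
  qed
  have "emeasure (noise lam) (restart_event F k (Suc n) i t C) =
      (\<integral>\<^sup>+x. indicator {..t} (holding (fst x)) * ?E x * emeasure (noise lam) C \<partial>tick lam)"
    unfolding emeasure_restart_event_Suc[OF F C]
    by (intro nn_integral_cong) (auto simp: Suc.IH mult.assoc split: split_indicator)
  also have "\<dots> = emeasure (noise lam) (restart_event F k (Suc n) i t UNIV) * emeasure (noise lam) C"
    unfolding emeasure_restart_event_Suc[OF F UNIV_in_sets_noise] by (rule nn_integral_multc) measurable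
  finally show ?case .
qed

lemma AE_restart_event_Union:
  assumes s: "0 \<le> s"
    and A: "\<And>\<omega> m. jump_time \<omega> m \<le> s \<Longrightarrow> s < jump_time \<omega> (Suc m) \<Longrightarrow>
      \<omega> \<in> A \<longleftrightarrow> skeleton F i \<omega> m = k \<and> restart m s \<omega> \<in> C"
  shows "AE \<omega> in noise lam. \<omega> \<in> A \<longleftrightarrow> \<omega> \<in> (\<Union>m. restart_event F k m i s C)"
  using AE_not_explosive[of s]
proof (rule eventually_mono)
  fix \<omega> assume "\<exists>n. s < jump_time \<omega> n"
  then obtain m where m: "jump_time \<omega> m \<le> s" "s < jump_time \<omega> (Suc m)"
    using holding_interval_exists[OF s] by metis
  then have "\<omega> \<in> (\<Union>m'. restart_event F k m' i s C) \<longleftrightarrow> skeleton F i \<omega> m = k \<and> restart m s \<omega> \<in> C"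
    unfolding restart_event_def by (blast dest: holding_interval_unique)
  then show "\<omega> \<in> A \<longleftrightarrow> \<omega> \<in> (\<Union>m. restart_event F k m i s C)"
    using A[OF m] by simp
qed

lemma emeasure_markov_property:
  fixes F :: "'a::countable \<Rightarrow> real \<Rightarrow> 'a"
  assumes F[measurable]: "\<And>i. F i \<in> measurable borel (count_space UNIV)"
    and C[measurable]: "C \<in> sets (noise lam)" and A[measurable]: "A \<in> sets (noise lam)" and s: "0 \<le> s"
    and hA: "\<And>\<omega> m. jump_time \<omega> m \<le> s \<Longrightarrow> s < jump_time \<omega> (Suc m) \<Longrightarrow>
      \<omega> \<in> A \<longleftrightarrow> skeleton F i \<omega> m = k \<and> restart m s \<omega> \<in> C"
  shows "emeasure (noise lam) A = emeasure (noise lam) {\<omega>. chain_path F c i \<omega> s = k} * emeasure (noise lam) C"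
proof -
  have "emeasure (noise lam) A = emeasure (noise lam) (\<Union>m. restart_event F k m i s C)"
    by (rule emeasure_eq_AE[OF AE_restart_event_Union[OF s hA]]) auto
  also have "\<dots> = (\<Sum>m. emeasure (noise lam) (restart_event F k m i s UNIV)) * emeasure (noise lam) C"
    by (simp add: suminf_emeasure[symmetric] disjoint_family_restart_event emeasure_restart_event[OF F C s]
        ennreal_suminf_multc image_subset_iff)
  also have "(\<Sum>m. emeasure (noise lam) (restart_event F k m i s UNIV)) =
      emeasure (noise lam) (\<Union>m. restart_event F k m i s UNIV)"
    by (rule suminf_emeasure) (auto intro: disjoint_family_restart_event)
  also have "\<dots> = emeasure (noise lam) {\<omega>. chain_path F c i \<omega> s = k}"
    by (rule emeasure_eq_AE[OF AE_restart_event_Union[OF s], symmetric])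
      (auto simp: chain_path_eq_skeleton intro: sets_Collect_noise)
  finally show ?thesis .
qed

end

section \<open>Transition probabilities\<close>

lemma has_sum_measure_fibres:
  fixes g :: "'a \<Rightarrow> nat"
  assumes "finite_measure M"
    and g[measurable]: "g \<in> measurable M (count_space UNIV)" and B[measurable]: "B \<in> sets M"
  shows "((\<lambda>j. measure M {\<omega>\<in>B. g \<omega> = j}) has_sum measure M B) UNIV"
proof (rule sums_nonneg_imp_has_sum)
  interpret finite_measure M by fact
  have "(\<lambda>j. measure M {\<omega>\<in>B. g \<omega> = j}) sums measure M (\<Union>j. {\<omega>\<in>B. g \<omega> = j})"
  proof (rule finite_measure_UNION)
    show "range (\<lambda>j. {\<omega> \<in> B. g \<omega> = j}) \<subseteq> sets M"
      using measurable_sets[OF g, of "{_}"] by (auto intro!: sets.Int[OF B, of "g -` _ \<inter> space M", simplified])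
  qed (auto simp: disjoint_family_on_def)
  moreover have "(\<Union>j. {\<omega>\<in>B. g \<omega> = j}) = B" by auto
  ultimately show "(\<lambda>j. measure M {\<omega>\<in>B. g \<omega> = j}) sums measure M B" by simp
qed auto

context uniformization
begin

definition trans_prob :: "('a \<Rightarrow> real \<Rightarrow> 'a) \<Rightarrow> 'a \<Rightarrow> 'a \<Rightarrow> 'a \<Rightarrow> real \<Rightarrow> real" where
  "trans_prob F c i j t = measure (noise lam) {\<omega>. chain_path F c i \<omega> t = j}"

lemma markov_property:
  fixes F :: "'a::countable \<Rightarrow> real \<Rightarrow> 'a"
  assumes F[measurable]: "\<And>i. F i \<in> measurable borel (count_space UNIV)"
    and C[measurable]: "C \<in> sets (noise lam)" and A[measurable]: "A \<in> sets (noise lam)" and s: "0 \<le> s"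
    and hA: "\<And>\<omega> m. jump_time \<omega> m \<le> s \<Longrightarrow> s < jump_time \<omega> (Suc m) \<Longrightarrow>
      \<omega> \<in> A \<longleftrightarrow> skeleton F i \<omega> m = k \<and> restart m s \<omega> \<in> C"
  shows "measure (noise lam) A = trans_prob F c i k s * measure (noise lam) C"
  using emeasure_markov_property[OF F C A s hA, of c]
  by (simp add: Noise.emeasure_eq_measure trans_prob_def ennreal_mult'[symmetric])

lemma trans_prob_0: "trans_prob F c i j 0 = (if i = j then 1 else 0)"
  using Noise.prob_space by (simp add: trans_prob_def chain_path_0)

lemma trans_prob_eq_0_outside:
  assumes "\<And>i u. i \<in> S \<Longrightarrow> F i u \<in> S" "i \<in> S" "c \<in> S" "j \<notin> S"
  shows "trans_prob F c i j t = 0"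
proof -
  have "{\<omega>. chain_path F c i \<omega> t = j} = {}"
    using chain_path_in[of S F i c] assms by blast
  then show ?thesis by (simp add: trans_prob_def)
qed

lemma trans_prob_row_sum:
  fixes F :: "nat \<Rightarrow> real \<Rightarrow> nat"
  assumes F[measurable]: "\<And>i. F i \<in> measurable borel (count_space UNIV)"
    and FS: "\<And>i u. i \<in> S \<Longrightarrow> F i u \<in> S" and i: "i \<in> S" and c: "c \<in> S"
  shows "((\<lambda>j. trans_prob F c i j t) has_sum 1) S"
proof -
  have "((\<lambda>j. measure (noise lam) {\<omega>\<in>UNIV. chain_path F c i \<omega> t = j}) has_sum measure (noise lam) UNIV) UNIV"
    by (rule has_sum_measure_fibres) (auto intro: Noise.finite_measure_axioms)
  then show ?thesis
    using Noise.prob_space trans_prob_eq_0_outside[OF FS i c]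
    by (subst (asm) has_sum_cong_neutral[where T=S]) (auto simp: trans_prob_def)
qed

lemma trans_prob_Chapman_Kolmogorov:
  fixes F :: "nat \<Rightarrow> real \<Rightarrow> nat"
  assumes F[measurable]: "\<And>i. F i \<in> measurable borel (count_space UNIV)"
    and FS: "\<And>i u. i \<in> S \<Longrightarrow> F i u \<in> S" and i: "i \<in> S" and c: "c \<in> S"
    and s: "0 \<le> s" and t: "0 \<le> t"
  shows "((\<lambda>k. trans_prob F c i k s * trans_prob F c k j t) has_sum trans_prob F c i j (s + t)) S"
proof -
  define B where "B = {\<omega>. chain_path F c i \<omega> (s + t) = j}"
  have B[measurable]: "B \<in> sets (noise lam)"
    unfolding B_def by (intro sets_Collect_noise) measurable
  have "measure (noise lam) {\<omega>\<in>B. chain_path F c i \<omega> s = k} = trans_prob F c i k s * trans_prob F c k j t" for k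
    unfolding trans_prob_def[of F c k]
  proof (rule markov_property[OF F])
    fix \<omega> m assume m: "jump_time \<omega> m \<le> s" "s < jump_time \<omega> (Suc m)"
    show "\<omega> \<in> {\<omega>\<in>B. chain_path F c i \<omega> s = k} \<longleftrightarrow>
        skeleton F i \<omega> m = k \<and> restart m s \<omega> \<in> {\<omega>. chain_path F c k \<omega> t = j}"
      using chain_path_eq_skeleton[OF m, of F c i] chain_path_restart[OF t m, of F c i] by (auto simp: B_def)
  qed (use s in \<open>auto intro: sets_Collect_noise\<close>)
  moreover have "((\<lambda>k. measure (noise lam) {\<omega>\<in>B. chain_path F c i \<omega> s = k}) has_sum measure (noise lam) B) UNIV"
    by (rule has_sum_measure_fibres) (auto intro: Noise.finite_measure_axioms)
  ultimately show ?thesis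
    using trans_prob_eq_0_outside[OF FS i c]
    by (subst (asm) has_sum_cong_neutral[where T=S]) (auto simp: trans_prob_def B_def)
qed

end

context uniformization
begin

lemma measure_path_shift:
  fixes F :: "'a::countable \<Rightarrow> real \<Rightarrow> 'a" and ts :: "nat \<Rightarrow> real"
  assumes F[measurable]: "\<And>i. F i \<in> measurable borel (count_space UNIV)"
    and s: "0 \<le> s" and ts: "\<And>k. k \<le> n \<Longrightarrow> 0 \<le> ts k"
  shows "measure (noise lam) {\<omega>. chain_path F c i \<omega> s = j \<and> (\<forall>k\<le>n. chain_path F c i \<omega> (s + ts k) = js k)} =
    trans_prob F c i j s * measure (noise lam) {\<omega>. \<forall>k\<le>n. chain_path F c j \<omega> (ts k) = js k}"
proof -
  have [measurable]: "{\<omega>. \<forall>k\<le>n. chain_path F c j \<omega> (ts k) = js k} \<in> sets (noise lam)"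
    "{\<omega>. chain_path F c i \<omega> s = j \<and> (\<forall>k\<le>n. chain_path F c i \<omega> (s + ts k) = js k)} \<in> sets (noise lam)"
    by (intro sets_Collect_noise; measurable)+
  show ?thesis
  proof (rule markov_property[OF F _ _ s])
    fix \<omega> m assume m: "jump_time \<omega> m \<le> s" "s < jump_time \<omega> (Suc m)"
    have "chain_path F c i \<omega> (s + ts k) = chain_path F c (skeleton F i \<omega> m) (restart m s \<omega>) (ts k)"
      if "k \<le> n" for k
      using ts[OF that] m by (rule chain_path_restart)
    then show "\<omega> \<in> {\<omega>. chain_path F c i \<omega> s = j \<and> (\<forall>k\<le>n. chain_path F c i \<omega> (s + ts k) = js k)} \<longleftrightarrow>
        skeleton F i \<omega> m = j \<and> restart m s \<omega> \<in> {\<omega>. \<forall>k\<le>n. chain_path F c j \<omega> (ts k) = js k}"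
      using chain_path_eq_skeleton[OF m, of F c i] by auto
  qed measurable
qed

lemma all_le_Suc_conv: "(\<forall>k\<le>Suc n. P k) \<longleftrightarrow> P 0 \<and> (\<forall>k\<le>n. P (Suc k))"
  by (simp add: All_less_Suc2 flip: less_Suc_eq_le)

lemma measure_finite_dim:
  fixes F :: "'a::countable \<Rightarrow> real \<Rightarrow> 'a"
  assumes F[measurable]: "\<And>i. F i \<in> measurable borel (count_space UNIV)"
  shows "ts 0 = 0 \<Longrightarrow> (\<forall>k<n. ts k < ts (Suc k)) \<Longrightarrow>
    measure (noise lam) {\<omega>. \<forall>k\<le>n. chain_path F c i \<omega> (ts k) = js k} =
      (if js 0 = i then 1 else 0) * (\<Prod>k<n. trans_prob F c (js k) (js (Suc k)) (ts (Suc k) - ts k))"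
proof (induction n arbitrary: i ts js)
  case 0
  then show ?case using Noise.prob_space by (simp add: chain_path_0)
next
  case (Suc n)
  define ts' where "ts' k = ts (Suc k) - ts 1" for k
  define js' where "js' k = js (Suc k)" for k
  have mono: "ts k \<le> ts k'" if "k \<le> k'" "k' \<le> Suc n" for k k'
    using that
  proof (induction k' rule: dec_induct)
    case (step m) then show ?case using Suc.prems(2)[rule_format, of m] by simp
  qed simp
  have ts1: "0 \<le> ts 1" using mono[of 0 1] Suc.prems(1) by simp
  have ts': "0 \<le> ts' k" if "k \<le> n" for k using mono[of 1 "Suc k"] that by (simp add: ts'_def)
  have "(\<forall>k\<le>Suc n. chain_path F c i \<omega> (ts k) = js k) \<longleftrightarrow> js 0 = i \<and>
      (chain_path F c i \<omega> (ts 1) = js 1 \<and> (\<forall>k\<le>n. chain_path F c i \<omega> (ts 1 + ts' k) = js' k))" for \<omega>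
    using Suc.prems(1) unfolding all_le_Suc_conv by (auto simp: chain_path_0 ts'_def js'_def)
  then have "measure (noise lam) {\<omega>. \<forall>k\<le>Suc n. chain_path F c i \<omega> (ts k) = js k} =
      (if js 0 = i then 1 else 0) *
      (trans_prob F c i (js 1) (ts 1) * measure (noise lam) {\<omega>. \<forall>k\<le>n. chain_path F c (js 1) \<omega> (ts' k) = js' k})"
    using measure_path_shift[OF F ts1 ts'] by simp
  also have "measure (noise lam) {\<omega>. \<forall>k\<le>n. chain_path F c (js 1) \<omega> (ts' k) = js' k} =
      (\<Prod>k<n. trans_prob F c (js' k) (js' (Suc k)) (ts' (Suc k) - ts' k))"
    by (subst Suc.IH) (use Suc.prems in \<open>auto simp: ts'_def js'_def\<close>)
  finally show ?case
    using Suc.prems(1) by (subst prod.lessThan_Suc_shift) (simp add: ts'_def js'_def)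
qed

definition tick_prob :: "real \<Rightarrow> real" where
  "tick_prob t = 1 - exp (- lam * t)"

lemma tick_prob_nonneg: "0 \<le> t \<Longrightarrow> 0 \<le> tick_prob t"
  unfolding tick_prob_def using lam_pos by simp

lemma tick_prob_le: "tick_prob t \<le> lam * t"
  unfolding tick_prob_def using exp_ge_add_one_self[of "- lam * t"] by simp

lemma measure_tick_holding_le:
  assumes t: "0 \<le> t" and B: "B \<in> sets borel"
  shows "measure (tick lam) ({a. holding a \<le> t} \<times> B) = tick_prob t * measure unif_mark B"
proof -
  have "{a. t < holding a} \<in> sets (exp_time lam)" by measurable
  then have "emeasure (exp_time lam) {a. t < holding a} = (\<integral>\<^sup>+a. indicator {a. t < holding a} a \<partial>exp_time lam)"
    by simp
  also have "\<dots> = (\<integral>\<^sup>+a. indicator {t<..} (holding a) * 1 \<partial>exp_time lam)"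
    by (intro nn_integral_cong) (simp split: split_indicator)
  also have "\<dots> = ennreal (exp (- lam * t))"
    using exp_time_memoryless[of "\<lambda>_. 1" t] t Exp.emeasure_space_1 by simp
  finally have "measure (exp_time lam) {a. t < holding a} = exp (- lam * t)"
    by (simp add: Exp.emeasure_eq_measure)
  moreover have "{a. holding a \<le> t} = space (exp_time lam) - {a. t < holding a}" by auto
  ultimately have "measure (exp_time lam) {a. holding a \<le> t} = tick_prob t"
    using Exp.prob_compl[of "{a. t < holding a}"] by (simp add: tick_prob_def)
  moreover have "emeasure (tick lam) ({a. holding a \<le> t} \<times> B) =
      emeasure (exp_time lam) {a. holding a \<le> t} * emeasure unif_mark B"
    unfolding tick_def by (rule Unif.emeasure_pair_measure_Times) (use B in auto)
  ultimately show ?thesis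
    using tick_prob_nonneg[OF t]
    by (simp add: Exp.emeasure_eq_measure Unif.emeasure_eq_measure Tick.emeasure_eq_measure
        ennreal_mult'[symmetric] tick_def)
qed

lemma emeasure_noise_shd:
  assumes D[measurable]: "D \<in> sets (borel \<Otimes>\<^sub>M borel)"
  shows "emeasure (noise lam) {\<omega>. shd \<omega> \<in> D} = emeasure (tick lam) D"
proof -
  have [measurable]: "{\<omega>\<in>space (noise lam). shd \<omega> \<in> D} \<in> sets (noise lam)"
    unfolding noise_def by measurable
  have "emeasure (noise lam) {\<omega>. shd \<omega> \<in> D} = (\<integral>\<^sup>+\<omega>. indicator {\<omega>\<in>space (noise lam). shd \<omega> \<in> D} \<omega> \<partial>noise lam)"
    by (subst nn_integral_indicator) (simp_all del: space_noise, simp)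
  also have "\<dots> = (\<integral>\<^sup>+x. \<integral>\<^sup>+\<omega>. indicator {\<omega>\<in>space (noise lam). shd \<omega> \<in> D} (x ## \<omega>) \<partial>noise lam \<partial>tick lam)"
    by (rule nn_integral_noise) measurable
  also have "\<dots> = (\<integral>\<^sup>+x. indicator D x \<partial>tick lam)"
    using Noise.emeasure_space_1 by (intro nn_integral_cong) (simp split: split_indicator)
  finally show ?thesis by simp
qed

lemma emeasure_noise_two_heads:
  assumes D[measurable]: "D \<in> sets (borel \<Otimes>\<^sub>M borel)"
  shows "emeasure (noise lam) {\<omega>. shd \<omega> \<in> D \<and> shd (stl \<omega>) \<in> D} = emeasure (tick lam) D * emeasure (tick lam) D"
proof -
  let ?E = "{\<omega>\<in>space (noise lam). shd \<omega> \<in> D \<and> shd (stl \<omega>) \<in> D}"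
  have [measurable]: "?E \<in> sets (noise lam)" "{\<omega>\<in>space (noise lam). shd \<omega> \<in> D} \<in> sets (noise lam)"
    unfolding noise_def by measurable
  have "emeasure (noise lam) {\<omega>. shd \<omega> \<in> D \<and> shd (stl \<omega>) \<in> D} = (\<integral>\<^sup>+\<omega>. indicator ?E \<omega> \<partial>noise lam)"
    by (subst nn_integral_indicator) (simp_all del: space_noise, simp)
  also have "\<dots> = (\<integral>\<^sup>+x. \<integral>\<^sup>+\<omega>. indicator ?E (x ## \<omega>) \<partial>noise lam \<partial>tick lam)"
    by (rule nn_integral_noise) measurable
  also have "\<dots> = (\<integral>\<^sup>+x. indicator D x * emeasure (noise lam) {\<omega>\<in>space (noise lam). shd \<omega> \<in> D} \<partial>tick lam)"
    by (intro nn_integral_cong, subst nn_integral_cmult_indicator[symmetric], measurable)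
      (auto intro!: nn_integral_cong split: split_indicator)
  also have "\<dots> = emeasure (tick lam) D * emeasure (tick lam) D"
    using emeasure_noise_shd[OF D] by (subst nn_integral_multc) simp_all
  finally show ?thesis .
qed

lemma measure_first_tick:
  assumes t: "0 \<le> t" and B[measurable]: "B \<in> sets borel"
  shows "measure (noise lam) {\<omega>. holding (fst (shd \<omega>)) \<le> t \<and> snd (shd \<omega>) \<in> B} = tick_prob t * measure unif_mark B"
proof -
  have D: "{a. holding a \<le> t} \<times> B \<in> sets (borel \<Otimes>\<^sub>M borel)"
    by (rule pair_measureI) (auto simp: pred_def)
  have "{\<omega>. holding (fst (shd \<omega>)) \<le> t \<and> snd (shd \<omega>) \<in> B} = {\<omega>. shd \<omega> \<in> {a. holding a \<le> t} \<times> B}"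
    by (auto simp: mem_Times_iff)
  then show ?thesis
    using emeasure_noise_shd[OF D] measure_tick_holding_le[OF t B]
    by (simp add: Noise.emeasure_eq_measure Tick.emeasure_eq_measure tick_def)
qed

lemma measure_no_tick:
  assumes t: "0 \<le> t"
  shows "measure (noise lam) {\<omega>. t < holding (fst (shd \<omega>))} = exp (- lam * t)"
proof -
  have "{\<omega>. t < holding (fst (shd \<omega>))} =
      space (noise lam) - {\<omega>. holding (fst (shd \<omega>)) \<le> t \<and> snd (shd \<omega>) \<in> UNIV}"
    by (auto simp: not_le)
  moreover have "{\<omega>. holding (fst (shd \<omega>)) \<le> t \<and> snd (shd \<omega>) \<in> UNIV} \<in> sets (noise lam)"
    by (intro sets_Collect_noise, unfold noise_def) measurable
  ultimately show ?thesis
    using Noise.prob_compl measure_first_tick[OF t, of UNIV] Unif.prob_space by (simp add: tick_prob_def)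
qed

lemma measure_two_ticks_le:
  assumes t: "0 \<le> t"
  shows "measure (noise lam) {\<omega>. holding (fst (shd \<omega>)) + holding (fst (shd (stl \<omega>))) \<le> t} \<le> tick_prob t ^ 2"
proof -
  define D where "D = {a. holding a \<le> t} \<times> (UNIV :: real set)"
  have D[measurable]: "D \<in> sets (borel \<Otimes>\<^sub>M borel)" unfolding D_def
    by (rule pair_measureI) (auto simp: pred_def)
  have "measure (tick lam) D = tick_prob t"
    using measure_tick_holding_le[OF t, of UNIV] Unif.prob_space by (simp add: D_def)
  moreover have "{\<omega>. holding (fst (shd \<omega>)) + holding (fst (shd (stl \<omega>))) \<le> t} \<subseteq> {\<omega>. shd \<omega> \<in> D \<and> shd (stl \<omega>) \<in> D}"
    using holding_pos by (auto simp: D_def mem_Times_iff) (smt (verit) holding_pos)+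
  moreover have "{\<omega>. shd \<omega> \<in> D \<and> shd (stl \<omega>) \<in> D} \<in> sets (noise lam)"
    using D by (intro sets_Collect_noise) (unfold noise_def, measurable)
  ultimately have "measure (noise lam) {\<omega>. holding (fst (shd \<omega>)) + holding (fst (shd (stl \<omega>))) \<le> t}
      \<le> measure (noise lam) {\<omega>. shd \<omega> \<in> D \<and> shd (stl \<omega>) \<in> D}"
    by (intro Noise.finite_measure_mono)
  also have "\<dots> = measure (tick lam) D * measure (tick lam) D"
    using emeasure_noise_two_heads[OF D]
    by (simp add: Noise.emeasure_eq_measure Tick.emeasure_eq_measure tick_def ennreal_mult'[symmetric])
  finally show ?thesis using \<open>measure (tick lam) D = tick_prob t\<close> by (simp add: power2_eq_square)
qed

end

lemma abs_measure_diff_le_if_Diff_eq: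
  assumes "finite_measure M" "A \<in> sets M" "B \<in> sets M" "C \<in> sets M" "A - C = B - C"
  shows "\<bar>measure M A - measure M B\<bar> \<le> measure M C"
proof -
  interpret finite_measure M by fact
  have "measure M X \<le> measure M Y + measure M C" if "X \<in> sets M" "Y \<in> sets M" "X - C = Y - C" for X Y
  proof -
    have "measure M X \<le> measure M (Y \<union> C)"
      using that assms by (intro finite_measure_mono) auto
    also have "\<dots> \<le> measure M Y + measure M C"
      using that assms by (intro measure_Un_le) auto
    finally show ?thesis .
  qed
  from this[of A B] this[of B A] assms show ?thesis by (simp add: abs_le_iff)
qed

lemma has_real_derivative_at_right_0_if_quadratic_error:
  assumes h: "(h has_real_derivative D) (at_right 0)" and f0: "f 0 = h 0"
    and err: "\<And>t. 0 \<le> t \<Longrightarrow> \<bar>f t - h t\<bar> \<le> K * t\<^sup>2"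
  shows "(f has_real_derivative D) (at_right 0)"
proof -
  define r where "r t = f t - h t" for t
  have "(r has_real_derivative 0) (at_right 0)"
    unfolding has_field_derivative_iff
  proof (rule Lim_null_comparison)
    show "\<forall>\<^sub>F y in at_right 0. norm ((r y - r 0) / (y - 0)) \<le> K * y"
      unfolding eventually_at_filter
    proof (intro always_eventually allI impI)
      fix y :: real assume "y \<noteq> 0" "y \<in> {0<..}"
      then have y: "0 < y" by simp
      have "\<bar>r y\<bar> / y \<le> K * y\<^sup>2 / y" using err[of y] y by (intro divide_right_mono) (auto simp: r_def)
      then show "norm ((r y - r 0) / (y - 0)) \<le> K * y"
        using y f0 by (simp add: r_def power2_eq_square abs_div)
    qed
    show "((\<lambda>y. K * y) \<longlongrightarrow> 0) (at_right 0)"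
      by (rule tendsto_mult_right_zero) (rule tendsto_ident_at)
  qed
  from DERIV_add[OF h this] show ?thesis by (simp add: r_def)
qed

context uniformization
begin

lemma trans_prob_small_time:
  fixes F :: "'a::countable \<Rightarrow> real \<Rightarrow> 'a"
  assumes F[measurable]: "\<And>i. F i \<in> measurable borel (count_space UNIV)" and t: "0 \<le> t"
  shows "\<bar>trans_prob F c i j t -
    ((if i = j then 1 else 0) * exp (- lam * t) + tick_prob t * measure unif_mark {u. F i u = j})\<bar> \<le> tick_prob t ^ 2"
proof -
  define first where "first \<omega> = holding (fst (shd \<omega>))" for \<omega> :: "(real \<times> real) stream"
  define jump where "jump = {\<omega>. first \<omega> \<le> t \<and> snd (shd \<omega>) \<in> {u. F i u = j}}"
  define stay where "stay = {\<omega>. i = j \<and> t < first \<omega>}"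
  define two where "two = {\<omega>. first \<omega> + holding (fst (shd (stl \<omega>))) \<le> t}"
  have [measurable]: "{u. F i u = j} \<in> sets borel"
    using measurable_sets[OF F, of "{j}" i] by (simp add: vimage_def Collect_conj_eq)
  have sets: "jump \<in> sets (noise lam)" "stay \<in> sets (noise lam)" "two \<in> sets (noise lam)"
    "{\<omega>. chain_path F c i \<omega> t = j} \<in> sets (noise lam)"
    unfolding jump_def stay_def two_def first_def by (intro sets_Collect_noise; unfold noise_def; measurable)+
  have "{\<omega>. chain_path F c i \<omega> t = j} - two = (stay \<union> jump) - two"
  proof (intro set_eqI)
    fix \<omega>
    show "\<omega> \<in> {\<omega>. chain_path F c i \<omega> t = j} - two \<longleftrightarrow> \<omega> \<in> (stay \<union> jump) - two"
    proof (cases "\<omega> \<in> two")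
      case False
      then have "t < first \<omega> + holding (fst (shd (stl \<omega>)))" by (simp add: two_def not_le)
      then show ?thesis
        using False chain_path_at_most_one_tick[OF t, of \<omega> F c i] by (auto simp: stay_def jump_def first_def)
    qed simp
  qed
  then have "\<bar>trans_prob F c i j t - measure (noise lam) (stay \<union> jump)\<bar> \<le> measure (noise lam) two"
    unfolding trans_prob_def using sets
    by (intro abs_measure_diff_le_if_Diff_eq Noise.finite_measure_axioms) auto
  moreover have "measure (noise lam) (stay \<union> jump) = measure (noise lam) stay + measure (noise lam) jump"
    using sets by (intro Noise.finite_measure_Union) (auto simp: stay_def jump_def)
  moreover have "measure (noise lam) jump = tick_prob t * measure unif_mark {u. F i u = j}"
    unfolding jump_def first_def by (rule measure_first_tick[OF t]) measurable
  moreover have "measure (noise lam) stay = (if i = j then 1 else 0) * exp (- lam * t)"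
    by (cases "i = j") (simp_all add: stay_def first_def measure_no_tick[OF t])
  moreover have "measure (noise lam) two \<le> tick_prob t ^ 2"
    unfolding two_def first_def by (rule measure_two_ticks_le[OF t])
  ultimately show ?thesis by simp
qed

lemma trans_prob_has_derivative:
  fixes F :: "'a::countable \<Rightarrow> real \<Rightarrow> 'a"
  assumes F[measurable]: "\<And>i. F i \<in> measurable borel (count_space UNIV)"
  shows "(trans_prob F c i j has_real_derivative
    lam * (measure unif_mark {u. F i u = j} - (if i = j then 1 else 0))) (at_right 0)"
proof (rule has_real_derivative_at_right_0_if_quadratic_error)
  define \<pi> where "\<pi> = measure unif_mark {u. F i u = j}"
  define \<delta> :: real where "\<delta> = (if i = j then 1 else 0)"
  show "((\<lambda>t. \<delta> * exp (- lam * t) + (1 - exp (- lam * t)) * \<pi>) has_real_derivative lam * (\<pi> - \<delta>)) (at_right 0)"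
  proof -
    have "((\<lambda>t. \<delta> * exp (- lam * t) + (1 - exp (- lam * t)) * \<pi>) has_real_derivative \<delta> * (- lam) + lam * \<pi>)
        (at_right 0)"
      by (rule derivative_eq_intros refl | simp)+
    then show ?thesis by (simp add: algebra_simps)
  qed
  show "trans_prob F c i j 0 = \<delta> * exp (- lam * 0) + (1 - exp (- lam * 0)) * \<pi>"
    by (simp add: trans_prob_0 \<delta>_def)
  show "\<bar>trans_prob F c i j t - (\<delta> * exp (- lam * t) + (1 - exp (- lam * t)) * \<pi>)\<bar> \<le> lam\<^sup>2 * t\<^sup>2"
    if "0 \<le> t" for t
  proof -
    have "tick_prob t ^ 2 \<le> (lam * t) ^ 2"
      by (intro power_mono tick_prob_le tick_prob_nonneg that)
    then show ?thesis
      using trans_prob_small_time[where F=F, OF F that, of c i j]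
      by (simp add: \<pi>_def \<delta>_def tick_prob_def power_mult_distrib algebra_simps)
  qed
qed

end

section \<open>Two paths driven by the same noise\<close>

lemma pred_eq_count_space[measurable (raw)]:
  fixes f g :: "'b \<Rightarrow> 'a::countable"
  assumes [measurable]: "f \<in> measurable M (count_space UNIV)" "g \<in> measurable M (count_space UNIV)"
  shows "Measurable.pred M (\<lambda>x. f x = g x)"
proof -
  have "Measurable.pred M (\<lambda>x. (\<lambda>k x. k = g x) (f x) x)"
    by (rule measurable_compose_countable[where g=f]) measurable
  then show ?thesis by simp
qed

lemma pair_jump_measurable:
  fixes F F' :: "'a \<Rightarrow> real \<Rightarrow> 'a::countable"
  assumes [measurable]: "\<And>i. F i \<in> measurable borel (count_space UNIV)" "\<And>i. F' i \<in> measurable borel (count_space UNIV)"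
  shows "(\<lambda>(a, b) u. (F a u, F' b u)) p \<in> measurable borel (count_space UNIV)"
proof -
  have "(\<lambda>u. (F a u, F' b u)) \<in> measurable borel (count_space UNIV)" for a b
  proof (subst measurable_count_space_eq2_countable, safe)
    fix j j'
    have "(\<lambda>u. (F a u, F' b u)) -` {(j, j')} \<inter> space borel = (F a -` {j} \<inter> space borel) \<inter> (F' b -` {j'} \<inter> space borel)"
      by auto
    then show "(\<lambda>u. (F a u, F' b u)) -` {(j, j')} \<inter> space borel \<in> sets borel"
      by (auto intro!: sets.Int measurable_sets[of _ borel "count_space UNIV"])
  qed auto
  then show ?thesis by (cases p) simp
qed

locale path_coupling = uniformization +
  fixes F F' :: "'a::countable \<Rightarrow> real \<Rightarrow> 'a" and S :: "'a set" and c :: 'a and \<delta> :: real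
  assumes F_measurable[measurable]: "\<And>i. F i \<in> measurable borel (count_space UNIV)"
    and F'_measurable[measurable]: "\<And>i. F' i \<in> measurable borel (count_space UNIV)"
    and F_closed: "\<And>i u. i \<in> S \<Longrightarrow> F i u \<in> S"
    and c_in: "c \<in> S"
    and jumps_differ: "\<And>k. k \<in> S \<Longrightarrow> measure unif_mark {u. F k u \<noteq> F' k u} \<le> \<delta>"
begin

definition mismatch_prob :: "'a \<Rightarrow> real \<Rightarrow> real" where
  "mismatch_prob i s = measure (noise lam) {\<omega>. chain_path F c i \<omega> s \<noteq> chain_path F' c i \<omega> s}"

lemma mismatch_measurable[measurable]:
  "{\<omega>. chain_path F c i \<omega> s \<noteq> chain_path F' c i \<omega> s} \<in> sets (noise lam)"
  by (intro sets_Collect_noise) measurable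

lemma mismatch_prob_small_time:
  assumes k: "k \<in> S" and r: "0 \<le> r"
  shows "mismatch_prob k r \<le> lam * r * \<delta> + (lam * r)\<^sup>2"
proof -
  define jump where "jump = {\<omega>. holding (fst (shd \<omega>)) \<le> r \<and> snd (shd \<omega>) \<in> {u. F k u \<noteq> F' k u}}"
  define two where "two = {\<omega> :: (real \<times> real) stream. holding (fst (shd \<omega>)) + holding (fst (shd (stl \<omega>))) \<le> r}"
  have "{u\<in>space borel. F k u \<noteq> F' k u} \<in> sets borel"
    by measurable
  then have [measurable]: "{u. F k u \<noteq> F' k u} \<in> sets borel"
    by simp
  have sets: "jump \<in> sets (noise lam)" "two \<in> sets (noise lam)"
    unfolding jump_def two_def by (intro sets_Collect_noise; unfold noise_def; measurable)+
  have "{\<omega>. chain_path F c k \<omega> r \<noteq> chain_path F' c k \<omega> r} \<subseteq> jump \<union> two"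
  proof
    fix \<omega> assume differ: "\<omega> \<in> {\<omega>. chain_path F c k \<omega> r \<noteq> chain_path F' c k \<omega> r}"
    show "\<omega> \<in> jump \<union> two"
    proof (rule ccontr)
      assume "\<omega> \<notin> jump \<union> two"
      then have "r < holding (fst (shd \<omega>)) + holding (fst (shd (stl \<omega>)))"
        and "holding (fst (shd \<omega>)) \<le> r \<Longrightarrow> F k (snd (shd \<omega>)) = F' k (snd (shd \<omega>))"
        by (auto simp: jump_def two_def)
      then show False
        using differ chain_path_at_most_one_tick[OF r, of \<omega> F c k] chain_path_at_most_one_tick[OF r, of \<omega> F' c k]
        by (simp split: if_splits)
    qed
  qed
  then have "mismatch_prob k r \<le> measure (noise lam) (jump \<union> two)"
    unfolding mismatch_prob_def using sets by (intro Noise.finite_measure_mono) auto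
  also have "\<dots> \<le> measure (noise lam) jump + measure (noise lam) two"
    using sets by (intro measure_Un_le) auto
  also have "measure (noise lam) jump = tick_prob r * measure unif_mark {u. F k u \<noteq> F' k u}"
    unfolding jump_def by (rule measure_first_tick[OF r]) measurable
  also have "\<dots> \<le> lam * r * \<delta>"
    by (intro mult_mono tick_prob_le jumps_differ k tick_prob_nonneg r) (use lam_pos r in auto)
  also have "measure (noise lam) two \<le> tick_prob r ^ 2"
    unfolding two_def by (rule measure_two_ticks_le[OF r])
  also have "\<dots> \<le> (lam * r) ^ 2"
    by (intro power_mono tick_prob_le tick_prob_nonneg r)
  finally show ?thesis by simp
qed

lemma emeasure_agree_then_mismatch:
  assumes s: "0 \<le> s" and r: "0 \<le> r"
  shows "emeasure (noise lam) {\<omega>. chain_path F c i \<omega> s = k \<and> chain_path F' c i \<omega> s = k \<and>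
      chain_path F c i \<omega> (s + r) \<noteq> chain_path F' c i \<omega> (s + r)} =
    emeasure (noise lam) {\<omega>. chain_path (\<lambda>(a, b) u. (F a u, F' b u)) (c, c) (i, i) \<omega> s = (k, k)} *
    emeasure (noise lam) {\<omega>. chain_path F c k \<omega> r \<noteq> chain_path F' c k \<omega> r}"
proof (rule emeasure_markov_property[OF pair_jump_measurable[OF F_measurable F'_measurable] _ _ s])
  fix \<omega> m assume m: "jump_time \<omega> m \<le> s" "s < jump_time \<omega> (Suc m)"
  show "\<omega> \<in> {\<omega>. chain_path F c i \<omega> s = k \<and> chain_path F' c i \<omega> s = k \<and>
      chain_path F c i \<omega> (s + r) \<noteq> chain_path F' c i \<omega> (s + r)} \<longleftrightarrow>
    skeleton (\<lambda>(a, b) u. (F a u, F' b u)) (i, i) \<omega> m = (k, k) \<and>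
      restart m s \<omega> \<in> {\<omega>. chain_path F c k \<omega> r \<noteq> chain_path F' c k \<omega> r}"
    using chain_path_eq_skeleton[OF m, of F c i] chain_path_eq_skeleton[OF m, of F' c i]
      chain_path_restart[OF r m, of F c i] chain_path_restart[OF r m, of F' c i]
    by (auto simp: skeleton_pair)
qed (intro sets_Collect_noise; measurable)+

lemma emeasure_agree_then_mismatch_le:
  assumes i: "i \<in> S" and s: "0 \<le> s" and r: "0 \<le> r"
  shows "emeasure (noise lam) {\<omega>. chain_path F c i \<omega> s = k \<and> chain_path F' c i \<omega> s = k \<and>
      chain_path F c i \<omega> (s + r) \<noteq> chain_path F' c i \<omega> (s + r)} \<le>
    emeasure (noise lam) {\<omega>. chain_path (\<lambda>(a, b) u. (F a u, F' b u)) (c, c) (i, i) \<omega> s = (k, k)} *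
    ennreal (lam * r * \<delta> + (lam * r)\<^sup>2)"
proof (cases "k \<in> S")
  case True
  have "emeasure (noise lam) {\<omega>. chain_path F c k \<omega> r \<noteq> chain_path F' c k \<omega> r} \<le> ennreal (lam * r * \<delta> + (lam * r)\<^sup>2)"
    using mismatch_prob_small_time[OF True r] by (simp add: mismatch_prob_def Noise.emeasure_eq_measure ennreal_leI)
  then show ?thesis
    unfolding emeasure_agree_then_mismatch[OF s r] by (rule mult_left_mono) simp
next
  case False
  have "{\<omega>. chain_path (\<lambda>(a, b) u. (F a u, F' b u)) (c, c) (i, i) \<omega> s = (k, k)} = {}"
    using chain_path_in[OF F_closed i c_in] False by (auto simp: chain_path_pair)
  then show ?thesis by (simp add: emeasure_agree_then_mismatch[OF s r])
qed

text \<open>On the event that the two paths agree at time \<open>s\<close>, they restart from a common state,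
  so the Markov property of the pair reduces a mismatch at \<open>s + r\<close> to a mismatch at \<open>r\<close>.\<close>
lemma mismatch_prob_add:
  assumes i: "i \<in> S" and s: "0 \<le> s" and r: "0 \<le> r"
  shows "mismatch_prob i (s + r) \<le> mismatch_prob i s + (lam * r * \<delta> + (lam * r)\<^sup>2)"
proof -
  define \<beta> where "\<beta> = lam * r * \<delta> + (lam * r)\<^sup>2"
  have \<beta>: "0 \<le> \<beta>"
    using mismatch_prob_small_time[OF c_in r] measure_nonneg by (metis \<beta>_def mismatch_prob_def order.trans)
  define A where "A k = {\<omega>. chain_path F c i \<omega> s = k \<and> chain_path F' c i \<omega> s = k \<and>
      chain_path F c i \<omega> (s + r) \<noteq> chain_path F' c i \<omega> (s + r)}" for k
  define B where "B k = {\<omega>. chain_path (\<lambda>(a, b) u. (F a u, F' b u)) (c, c) (i, i) \<omega> s = (k, k)}" for k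
  have [measurable]: "A k \<in> sets (noise lam)" "B k \<in> sets (noise lam)" for k
    unfolding A_def B_def using pair_jump_measurable[OF F_measurable F'_measurable]
    by (intro sets_Collect_noise; measurable)+
  have A_le: "emeasure (noise lam) (A k) \<le> emeasure (noise lam) (B k) * ennreal \<beta>" for k
    unfolding A_def B_def \<beta>_def by (rule emeasure_agree_then_mismatch_le[OF i s r])
  have disjoint: "disjoint_family A" "disjoint_family B"
    by (auto simp: disjoint_family_on_def A_def B_def)
  have "{\<omega>. chain_path F c i \<omega> (s + r) \<noteq> chain_path F' c i \<omega> (s + r)} \<subseteq>
      {\<omega>. chain_path F c i \<omega> s \<noteq> chain_path F' c i \<omega> s} \<union> (\<Union>k. A k)"
    by (auto simp: A_def)
  then have "emeasure (noise lam) {\<omega>. chain_path F c i \<omega> (s + r) \<noteq> chain_path F' c i \<omega> (s + r)}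
      \<le> emeasure (noise lam) {\<omega>. chain_path F c i \<omega> s \<noteq> chain_path F' c i \<omega> s} + emeasure (noise lam) (\<Union>k. A k)"
    by (intro order.trans[OF emeasure_mono emeasure_subadditive]) auto
  also have "emeasure (noise lam) (\<Union>k. A k) = (\<integral>\<^sup>+k. emeasure (noise lam) (A k) \<partial>count_space UNIV)"
    using disjoint by (intro emeasure_UN_countable) auto
  also have "\<dots> \<le> (\<integral>\<^sup>+k. emeasure (noise lam) (B k) * ennreal \<beta> \<partial>count_space UNIV)"
    by (intro nn_integral_mono A_le)
  also have "\<dots> = emeasure (noise lam) (\<Union>k. B k) * ennreal \<beta>"
    using disjoint by (simp add: nn_integral_multc emeasure_UN_countable)
  also have "\<dots> \<le> ennreal \<beta>"
    using mult_right_mono[OF Noise.emeasure_le_1, of "ennreal \<beta>"] by simp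
  finally show ?thesis
    using \<beta> by (simp add: mismatch_prob_def Noise.emeasure_eq_measure \<beta>_def[symmetric]
        ennreal_plus[symmetric] del: ennreal_plus)
qed

lemma mismatch_prob_le:
  assumes i: "i \<in> S" and s: "0 \<le> s"
  shows "mismatch_prob i s \<le> lam * \<delta> * s"
proof -
  have iterate: "mismatch_prob i (real m * r) \<le> real m * (lam * r * \<delta> + (lam * r)\<^sup>2)" if r: "0 \<le> r" for m r
  proof (induction m)
    case 0
    then show ?case by (simp add: mismatch_prob_def chain_path_0)
  next
    case (Suc m)
    have "mismatch_prob i (real (Suc m) * r) = mismatch_prob i (real m * r + r)"
      by (simp add: algebra_simps)
    also have "\<dots> \<le> mismatch_prob i (real m * r) + (lam * r * \<delta> + (lam * r)\<^sup>2)"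
      using r by (intro mismatch_prob_add i) auto
    finally show ?case using Suc by (simp add: algebra_simps)
  qed
  have "mismatch_prob i s \<le> lam * \<delta> * s + (lam * s)\<^sup>2 * inverse (real (Suc m))" for m
  proof -
    have "mismatch_prob i s = mismatch_prob i (real (Suc m) * (s / real (Suc m)))"
      by simp
    also have "\<dots> \<le> real (Suc m) * (lam * (s / real (Suc m)) * \<delta> + (lam * (s / real (Suc m)))\<^sup>2)"
      using s by (intro iterate) simp
    also have "\<dots> = lam * \<delta> * s + (lam * s)\<^sup>2 * inverse (real (Suc m))"
      by (simp add: field_simps power2_eq_square del: of_nat_Suc)
    finally show ?thesis .
  qed
  moreover have "(\<lambda>m. lam * \<delta> * s + (lam * s)\<^sup>2 * inverse (real (Suc m))) \<longlonglongrightarrow> lam * \<delta> * s + (lam * s)\<^sup>2 * 0"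
    by (intro tendsto_intros LIMSEQ_inverse_real_of_nat)
  ultimately show ?thesis
    using LIMSEQ_le_const[of _ "lam * \<delta> * s + (lam * s)\<^sup>2 * 0" "mismatch_prob i s"] by simp
qed

end

section \<open>Jump targets selected by a uniform mark\<close>

definition quantile :: "(nat \<Rightarrow> real) \<Rightarrow> real \<Rightarrow> nat" where
  "quantile w v = (LEAST j. v < (\<Sum>l<Suc j. w l))"

lemma quantile_measurable[measurable]: "quantile w \<in> measurable borel (count_space UNIV)"
  unfolding quantile_def by measurable

lemma quantile_eq_iff:
  assumes w: "\<And>l. 0 \<le> w l" "summable w" and v: "0 \<le> v" "v < suminf w"
  shows "quantile w v = j \<longleftrightarrow> (\<Sum>l<j. w l) \<le> v \<and> v < (\<Sum>l<Suc j. w l)"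
proof -
  have mono: "(\<Sum>l<j. w l) \<le> (\<Sum>l<k. w l)" if "j \<le> k" for j k
    using that w(1) by (intro sum_mono2) auto
  obtain n where "v < (\<Sum>l<n. w l)"
    using order_tendstoD(1)[OF summable_LIMSEQ[OF w(2)] v(2)] by (metis eventually_sequentially order_refl)
  with v(1) obtain n' where n': "v < (\<Sum>l<Suc n'. w l)" by (cases n) auto
  define g where "g = quantile w v"
  have upper: "v < (\<Sum>l<Suc g. w l)"
    unfolding g_def quantile_def by (rule LeastI[of _ n']) (rule n')
  have lower: "(\<Sum>l<g. w l) \<le> v"
  proof (cases g)
    case (Suc g')
    have "\<not> v < (\<Sum>l<Suc g'. w l)"
      using Least_le[of "\<lambda>j. v < (\<Sum>l<Suc j. w l)" g'] Suc unfolding g_def quantile_def by auto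
    then show ?thesis using Suc by simp
  qed (use v in simp)
  show ?thesis
  proof
    assume "quantile w v = j" then show "(\<Sum>l<j. w l) \<le> v \<and> v < (\<Sum>l<Suc j. w l)"
      using upper lower g_def by simp
  next
    assume j: "(\<Sum>l<j. w l) \<le> v \<and> v < (\<Sum>l<Suc j. w l)"
    have "\<not> g < j" using mono[of "Suc g" j] upper j by (auto simp: Suc_le_eq)
    moreover have "\<not> j < g" using mono[of "Suc j" g] lower j by (auto simp: Suc_le_eq)
    ultimately show "quantile w v = j" unfolding g_def by simp
  qed
qed

lemma quantile_pos:
  assumes "\<And>l. 0 \<le> w l" "summable w" "0 \<le> v" "v < suminf w"
  shows "0 < w (quantile w v)"
  using quantile_eq_iff[OF assms, of "quantile w v"] by simp

definition off_diag :: "nat set \<Rightarrow> nat \<Rightarrow> (nat \<Rightarrow> real) \<Rightarrow> nat \<Rightarrow> real" where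
  "off_diag S i f j = (if j \<in> S \<and> j \<noteq> i then f j else 0)"

lemma off_diag_sums:
  assumes "(f has_sum s) (S - {i})"
  shows "off_diag S i f sums s"
proof -
  have "(off_diag S i f has_sum s) UNIV"
    using assms by (subst has_sum_cong_neutral[where T="S - {i}" and g=f]) (auto simp: off_diag_def)
  then show ?thesis by (rule has_sum_imp_sums)
qed

definition shared_weight :: "(nat \<Rightarrow> nat \<Rightarrow> real) \<Rightarrow> (nat \<Rightarrow> nat \<Rightarrow> real) \<Rightarrow> nat set \<Rightarrow> real \<Rightarrow> nat \<Rightarrow> nat \<Rightarrow> real" where
  "shared_weight q q' S l i = off_diag S i (\<lambda>j. min (q i j) (q' i j) / l)"

definition excess_weight :: "(nat \<Rightarrow> nat \<Rightarrow> real) \<Rightarrow> (nat \<Rightarrow> nat \<Rightarrow> real) \<Rightarrow> nat set \<Rightarrow> real \<Rightarrow> nat \<Rightarrow> nat \<Rightarrow> real" where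
  "excess_weight q q' S l i = off_diag S i (\<lambda>j. (q i j - min (q i j) (q' i j)) / l)"

text \<open>The mark interval \<open>[0, 1]\<close> is laid out as: blocks of the shared weights
  \<open>min(q\<^sub>i\<^sub>j, q'\<^sub>i\<^sub>j)/l\<close>, in the same order for \<open>q\<close> and \<open>q'\<close>; then blocks of the excess weights of \<open>q\<close>;
  then the mass for staying in \<open>i\<close>. The targets for \<open>q\<close> and \<open>q'\<close> computed from the same mark can
  only differ when the mark lies beyond the shared blocks and before both excess regions end, a
  set of length at most \<open>\<Sum>\<^sub>j |q\<^sub>i\<^sub>j - q'\<^sub>i\<^sub>j| / l\<close>.\<close>
definition jump_target :: "(nat \<Rightarrow> nat \<Rightarrow> real) \<Rightarrow> (nat \<Rightarrow> nat \<Rightarrow> real) \<Rightarrow> nat set \<Rightarrow> real \<Rightarrow> nat \<Rightarrow> real \<Rightarrow> nat" where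
  "jump_target q q' S l i u =
    (let A = suminf (shared_weight q q' S l i); R = suminf (excess_weight q q' S l i) in
     if i \<notin> S then i
     else if 0 \<le> u \<and> u < A then quantile (shared_weight q q' S l i) u
     else if A \<le> u \<and> u < A + R then quantile (excess_weight q q' S l i) (u - A)
     else i)"

lemma jump_target_measurable[measurable]: "jump_target q q' S l i \<in> measurable borel (count_space UNIV)"
  unfolding jump_target_def Let_def by measurable

lemma shared_weight_swap: "shared_weight q q' S l i = shared_weight q' q S l i"
  unfolding shared_weight_def by (simp add: min.commute)

lemma partial_sums_le:
  fixes w :: "nat \<Rightarrow> real"
  assumes "\<And>l. 0 \<le> w l" "summable w"
  shows "0 \<le> (\<Sum>l<j. w l)" "(\<Sum>l<j. w l) \<le> (\<Sum>l<Suc j. w l)" "(\<Sum>l<Suc j. w l) \<le> suminf w"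
proof -
  show "0 \<le> (\<Sum>l<j. w l)" by (intro sum_nonneg) (simp add: assms)
  show "(\<Sum>l<j. w l) \<le> (\<Sum>l<Suc j. w l)" by (simp add: assms)
  show "(\<Sum>l<Suc j. w l) \<le> suminf w" by (rule sum_le_suminf) (auto simp: assms)
qed

locale rate_pair =
  fixes q q' :: "nat \<Rightarrow> nat \<Rightarrow> real" and S :: "nat set" and l :: real
  assumes l_pos: "0 < l"
    and q_nonneg: "\<And>i j. i \<in> S \<Longrightarrow> j \<in> S \<Longrightarrow> i \<noteq> j \<Longrightarrow> 0 \<le> q i j"
    and q'_nonneg: "\<And>i j. i \<in> S \<Longrightarrow> j \<in> S \<Longrightarrow> i \<noteq> j \<Longrightarrow> 0 \<le> q' i j"
    and q_summable: "\<And>i. i \<in> S \<Longrightarrow> q i summable_on (S - {i})"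
    and q'_summable: "\<And>i. i \<in> S \<Longrightarrow> q' i summable_on (S - {i})"
    and q_le: "\<And>i. i \<in> S \<Longrightarrow> (\<Sum>\<^sub>\<infinity>j\<in>S - {i}. q i j) \<le> l"
    and q'_le: "\<And>i. i \<in> S \<Longrightarrow> (\<Sum>\<^sub>\<infinity>j\<in>S - {i}. q' i j) \<le> l"
begin

lemma swap: "rate_pair q' q S l"
  by unfold_locales (use l_pos q_nonneg q'_nonneg q_summable q'_summable q_le q'_le in auto)

lemma abs_diff_summable: "i \<in> S \<Longrightarrow> (\<lambda>j. \<bar>q i j - q' i j\<bar>) summable_on (S - {i})"
  by (rule summable_on_comparison_test[OF summable_on_add[OF q_summable q'_summable]])
    (auto simp: q_nonneg q'_nonneg abs_le_iff)

context
  fixes i assumes i: "i \<in> S"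
begin

lemma shared_weight_nonneg: "0 \<le> shared_weight q q' S l i j"
  unfolding shared_weight_def off_diag_def using q_nonneg[OF i] q'_nonneg[OF i] l_pos by auto

lemma excess_weight_nonneg: "0 \<le> excess_weight q q' S l i j"
  unfolding excess_weight_def off_diag_def using l_pos by auto

lemma min_summable: "(\<lambda>j. min (q i j) (q' i j)) summable_on (S - {i})"
  by (rule summable_on_comparison_test[OF q_summable[OF i]]) (use i q_nonneg q'_nonneg in auto)

lemma shared_weight_sums:
  "shared_weight q q' S l i sums ((\<Sum>\<^sub>\<infinity>j\<in>S - {i}. min (q i j) (q' i j)) / l)"
  unfolding shared_weight_def using min_summable by (intro off_diag_sums has_sum_divide_const) simp

lemma excess_summable: "(\<lambda>j. q i j - min (q i j) (q' i j)) summable_on (S - {i})"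
  by (rule summable_on_comparison_test[OF q_summable[OF i]]) (use i q_nonneg q'_nonneg in auto)

lemma excess_weight_sums:
  "excess_weight q q' S l i sums ((\<Sum>\<^sub>\<infinity>j\<in>S - {i}. q i j - min (q i j) (q' i j)) / l)"
  unfolding excess_weight_def using excess_summable by (intro off_diag_sums has_sum_divide_const) simp

lemma summable_shared_weight: "summable (shared_weight q q' S l i)"
  using shared_weight_sums by (rule sums_summable)

lemma summable_excess_weight: "summable (excess_weight q q' S l i)"
  using excess_weight_sums by (rule sums_summable)

lemma suminf_shared_plus_excess:
  "suminf (shared_weight q q' S l i) + suminf (excess_weight q q' S l i) = (\<Sum>\<^sub>\<infinity>j\<in>S - {i}. q i j) / l"
  using sums_unique[OF shared_weight_sums] sums_unique[OF excess_weight_sums]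
    infsum_add[OF min_summable excess_summable]
  by (simp add: add_divide_distrib)

lemma suminf_nonneg_weights:
  "0 \<le> suminf (shared_weight q q' S l i)" "0 \<le> suminf (excess_weight q q' S l i)"
  by (intro suminf_nonneg summable_shared_weight summable_excess_weight shared_weight_nonneg
      excess_weight_nonneg)+

lemma jump_target_cases:
  obtains (shared) "0 \<le> u" "u < suminf (shared_weight q q' S l i)"
      "jump_target q q' S l i u = quantile (shared_weight q q' S l i) u"
  | (excess) "suminf (shared_weight q q' S l i) \<le> u"
      "u - suminf (shared_weight q q' S l i) < suminf (excess_weight q q' S l i)"
      "jump_target q q' S l i u = quantile (excess_weight q q' S l i) (u - suminf (shared_weight q q' S l i))"
  | (stay) "u < 0 \<or> suminf (shared_weight q q' S l i) + suminf (excess_weight q q' S l i) \<le> u"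
      "jump_target q q' S l i u = i"
proof -
  let ?A = "suminf (shared_weight q q' S l i)" and ?R = "suminf (excess_weight q q' S l i)"
  consider "0 \<le> u \<and> u < ?A" | "?A \<le> u \<and> u < ?A + ?R" | "u < 0 \<or> ?A + ?R \<le> u"
    using suminf_nonneg_weights by linarith
  then show thesis
    using that i suminf_nonneg_weights by cases (auto simp: jump_target_def Let_def)
qed

lemma jump_target_in: "jump_target q q' S l i u \<in> S"
proof (cases u rule: jump_target_cases)
  case shared
  then have "0 < shared_weight q q' S l i (jump_target q q' S l i u)"
    by (simp add: quantile_pos[OF shared_weight_nonneg summable_shared_weight])
  then show ?thesis by (simp add: shared_weight_def off_diag_def split: if_splits)
next
  case excess
  then have "0 < excess_weight q q' S l i (jump_target q q' S l i u)"
    by (simp add: quantile_pos[OF excess_weight_nonneg summable_excess_weight])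
  then show ?thesis by (simp add: excess_weight_def off_diag_def split: if_splits)
qed (simp add: i)

lemma jump_target_eq_self_iff:
  "jump_target q q' S l i u = i \<longleftrightarrow>
    u < 0 \<or> suminf (shared_weight q q' S l i) + suminf (excess_weight q q' S l i) \<le> u"
proof (cases u rule: jump_target_cases)
  case shared
  then have "0 < shared_weight q q' S l i (jump_target q q' S l i u)"
    by (simp add: quantile_pos[OF shared_weight_nonneg summable_shared_weight])
  then show ?thesis using shared suminf_nonneg_weights by (auto simp: shared_weight_def off_diag_def)
next
  case excess
  then have "0 < excess_weight q q' S l i (jump_target q q' S l i u)"
    by (simp add: quantile_pos[OF excess_weight_nonneg summable_excess_weight])
  then show ?thesis using excess suminf_nonneg_weights by (auto simp: excess_weight_def off_diag_def)
qed simp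

lemma suminf_weights_le_1: "suminf (shared_weight q q' S l i) + suminf (excess_weight q q' S l i) \<le> 1"
  unfolding suminf_shared_plus_excess using q_le[OF i] l_pos by simp

lemma jump_target_eq_off_diag_iff:
  assumes j: "j \<in> S" "j \<noteq> i"
  shows "jump_target q q' S l i u = j \<longleftrightarrow>
    u \<in> {(\<Sum>k<j. shared_weight q q' S l i k)..<(\<Sum>k<Suc j. shared_weight q q' S l i k)} \<union>
      {suminf (shared_weight q q' S l i) + (\<Sum>k<j. excess_weight q q' S l i k)..<
       suminf (shared_weight q q' S l i) + (\<Sum>k<Suc j. excess_weight q q' S l i k)}"
proof -
  note shared_bounds = partial_sums_le[OF shared_weight_nonneg summable_shared_weight, of j]
  note excess_bounds = partial_sums_le[OF excess_weight_nonneg summable_excess_weight, of j]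
  show ?thesis
  proof (cases u rule: jump_target_cases)
    case shared
    then show ?thesis
      using quantile_eq_iff[OF shared_weight_nonneg summable_shared_weight, of u j] shared_bounds excess_bounds
      by (auto simp del: sum.lessThan_Suc)
  next
    case excess
    then show ?thesis
      using quantile_eq_iff[OF excess_weight_nonneg summable_excess_weight, of "u - suminf (shared_weight q q' S l i)" j]
        excess_bounds shared_bounds
      by (auto simp del: sum.lessThan_Suc)
  next
    case stay
    then show ?thesis
      using j shared_bounds excess_bounds suminf_nonneg_weights by (auto simp del: sum.lessThan_Suc)
  qed
qed

lemma measure_jump_target_off_diag:
  assumes j: "j \<in> S" "j \<noteq> i"
  shows "measure unif_mark {u. jump_target q q' S l i u = j} = q i j / l"
proof -
  define A where "A = suminf (shared_weight q q' S l i)"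
  define a where "a j = (\<Sum>k<j. shared_weight q q' S l i k)" for j
  define b where "b j = (\<Sum>k<j. excess_weight q q' S l i k)" for j
  have a: "0 \<le> a j" "a j \<le> a (Suc j)" "a (Suc j) \<le> A"
    unfolding a_def A_def by (rule partial_sums_le[OF shared_weight_nonneg summable_shared_weight])+
  have b: "0 \<le> b j" "b j \<le> b (Suc j)" "b (Suc j) \<le> suminf (excess_weight q q' S l i)"
    unfolding b_def by (rule partial_sums_le[OF excess_weight_nonneg summable_excess_weight])+
  have iff: "jump_target q q' S l i u = j \<longleftrightarrow> u \<in> {a j..<a (Suc j)} \<union> {A + b j..<A + b (Suc j)}" for u
    unfolding a_def b_def A_def by (rule jump_target_eq_off_diag_iff[OF j])
  have "{a j..<a (Suc j)} \<union> {A + b j..<A + b (Suc j)} \<subseteq> {0..1}"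
    using a b suminf_weights_le_1 suminf_nonneg_weights unfolding A_def by auto
  then have "{0..1} \<inter> {u. jump_target q q' S l i u = j} = {a j..<a (Suc j)} \<union> {A + b j..<A + b (Suc j)}"
    using iff by blast
  then have "measure unif_mark {u. jump_target q q' S l i u = j} =
      measure lborel ({a j..<a (Suc j)} \<union> {A + b j..<A + b (Suc j)})"
    by (simp add: measure_unif_mark)
  also have "\<dots> = (a (Suc j) - a j) + (b (Suc j) - b j)"
    using a b by (subst measure_Union) auto
  also have "\<dots> = q i j / l"
    using j by (simp add: a_def b_def shared_weight_def excess_weight_def off_diag_def add_divide_distrib[symmetric])
  finally show ?thesis .
qed

lemma measure_jump_target_self:
  "measure unif_mark {u. jump_target q q' S l i u = i} = 1 - (\<Sum>\<^sub>\<infinity>j\<in>S - {i}. q i j) / l"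
proof -
  let ?A = "suminf (shared_weight q q' S l i)" and ?R = "suminf (excess_weight q q' S l i)"
  have "{0..1} \<inter> {u. jump_target q q' S l i u = i} = {?A + ?R..1}"
  proof (intro set_eqI iffI)
    fix u assume "u \<in> {0..1} \<inter> {u. jump_target q q' S l i u = i}"
    then show "u \<in> {?A + ?R..1}" using jump_target_eq_self_iff[of u] by auto
  next
    fix u assume "u \<in> {?A + ?R..1}"
    then show "u \<in> {0..1} \<inter> {u. jump_target q q' S l i u = i}"
      using jump_target_eq_self_iff[of u] suminf_nonneg_weights by auto
  qed
  then have "measure unif_mark {u. jump_target q q' S l i u = i} = 1 - (?A + ?R)"
    using suminf_weights_le_1 by (simp add: measure_unif_mark)
  then show ?thesis by (simp add: suminf_shared_plus_excess)
qed

end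

lemma jump_targets_differ_subset:
  assumes i: "i \<in> S"
  shows "{0..1} \<inter> {u. jump_target q q' S l i u \<noteq> jump_target q' q S l i u} \<subseteq>
    {suminf (shared_weight q q' S l i)..<
     suminf (shared_weight q q' S l i) + suminf (excess_weight q q' S l i) + suminf (excess_weight q' q S l i)}"
    (is "_ \<subseteq> {?A..<?A + ?R + ?R'}")
proof
  interpret swapped: rate_pair q' q S l by (rule swap)
  fix u assume u: "u \<in> {0..1} \<inter> {u. jump_target q q' S l i u \<noteq> jump_target q' q S l i u}"
  have nonneg: "0 \<le> ?A" "0 \<le> ?R" "0 \<le> ?R'"
    using suminf_nonneg_weights[OF i] swapped.suminf_nonneg_weights[OF i] by auto
  show "u \<in> {?A..<?A + ?R + ?R'}"
  proof (cases u rule: jump_target_cases[OF i, case_names shared excess stay])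
    case shared
    then have "jump_target q' q S l i u = jump_target q q' S l i u"
      using i by (simp add: jump_target_def Let_def shared_weight_swap[of q' q])
    then show ?thesis using u by simp
  next
    case excess
    then show ?thesis using nonneg by auto
  next
    case stay
    have "\<not> ?A + ?R' \<le> u"
    proof
      assume "?A + ?R' \<le> u"
      then have "jump_target q' q S l i u = i"
        using swapped.jump_target_eq_self_iff[OF i, of u] by (simp add: shared_weight_swap[of q' q])
      then show False using u stay by simp
    qed
    then show ?thesis using u stay nonneg by auto
  qed
qed

lemma suminf_excess_weights:
  assumes i: "i \<in> S"
  shows "suminf (excess_weight q q' S l i) + suminf (excess_weight q' q S l i) =
    (\<Sum>\<^sub>\<infinity>j\<in>S - {i}. \<bar>q i j - q' i j\<bar>) / l"
proof -
  interpret swapped: rate_pair q' q S l by (rule swap)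
  have "(\<lambda>j. (q i j - min (q i j) (q' i j)) + (q' i j - min (q' i j) (q i j))) = (\<lambda>j. \<bar>q i j - q' i j\<bar>)"
    by (auto simp: min_def abs_if)
  then show ?thesis
    using sums_unique[OF excess_weight_sums[OF i]] sums_unique[OF swapped.excess_weight_sums[OF i]]
      infsum_add[OF excess_summable[OF i] swapped.excess_summable[OF i]]
    by (simp add: add_divide_distrib)
qed

lemma measure_jump_targets_differ:
  assumes i: "i \<in> S"
  shows "measure unif_mark {u. jump_target q q' S l i u \<noteq> jump_target q' q S l i u}
    \<le> (\<Sum>\<^sub>\<infinity>j\<in>S - {i}. \<bar>q i j - q' i j\<bar>) / l"
proof -
  interpret swapped: rate_pair q' q S l by (rule swap)
  let ?A = "suminf (shared_weight q q' S l i)"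
    and ?R = "suminf (excess_weight q q' S l i)" and ?R' = "suminf (excess_weight q' q S l i)"
  have nonneg: "0 \<le> ?A" "0 \<le> ?R" "0 \<le> ?R'"
    using suminf_nonneg_weights[OF i] swapped.suminf_nonneg_weights[OF i] by auto
  have "{u\<in>space borel. jump_target q q' S l i u \<noteq> jump_target q' q S l i u} \<in> sets borel"
    by measurable
  then have meas: "{u. jump_target q q' S l i u \<noteq> jump_target q' q S l i u} \<in> sets borel"
    by simp
  have "measure unif_mark {u. jump_target q q' S l i u \<noteq> jump_target q' q S l i u} \<le>
      measure lborel {?A..<?A + ?R + ?R'}"
    unfolding measure_unif_mark[OF meas]
    by (rule measure_mono_fmeasurable[OF jump_targets_differ_subset[OF i]])
      (use meas nonneg in \<open>auto simp: fmeasurable_def\<close>)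
  also have "\<dots> = ?R + ?R'"
    using nonneg by simp
  finally show ?thesis
    unfolding suminf_excess_weights[OF i] .
qed

end

context rate_pair
begin

lemma jump_target_rates:
  assumes i: "i \<in> S" and j: "j \<in> S" and diag: "q i i = - (\<Sum>\<^sub>\<infinity>k\<in>S - {i}. q i k)"
  shows "l * (measure unif_mark {u. jump_target q q' S l i u = j} - (if i = j then 1 else 0)) = q i j"
proof (cases "i = j")
  case True
  then show ?thesis
    using l_pos measure_jump_target_self[OF i] diag by (simp add: field_simps)
next
  case False
  then show ?thesis
    using l_pos measure_jump_target_off_diag[OF i j] by simp
qed

lemma row_dist_le_Q_dist:
  assumes i: "i \<in> S"
  shows "(\<Sum>\<^sub>\<infinity>j\<in>S - {i}. \<bar>q i j - q' i j\<bar>) \<le> Q_dist S q q'"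
proof -
  have "(\<Sum>\<^sub>\<infinity>j\<in>S - {k}. \<bar>q k j - q' k j\<bar>) \<le> 2 * l" if k: "k \<in> S" for k
  proof -
    have "(\<Sum>\<^sub>\<infinity>j\<in>S - {k}. \<bar>q k j - q' k j\<bar>) \<le> (\<Sum>\<^sub>\<infinity>j\<in>S - {k}. q k j + q' k j)"
      using k by (intro infsum_mono abs_diff_summable summable_on_add q_summable q'_summable)
        (auto simp: q_nonneg q'_nonneg abs_le_iff)
    also have "\<dots> \<le> 2 * l"
      using k q_le[OF k] q'_le[OF k] by (simp add: infsum_add q_summable q'_summable)
    finally show ?thesis .
  qed
  then show ?thesis
    unfolding Q_dist_def using i by (intro cSUP_upper bdd_aboveI2) auto
qed

end

section \<open>Rate matrices\<close>

lemma conservative_nonneg: "conservative S q \<Longrightarrow> i \<in> S \<Longrightarrow> j \<in> S \<Longrightarrow> i \<noteq> j \<Longrightarrow> 0 \<le> q i j"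
  unfolding conservative_def by auto

lemma conservative_summable:
  assumes "conservative S q" "i \<in> S"
  shows "q i summable_on (S - {i})"
proof -
  have "q i summable_on S"
    using assms unfolding conservative_def summable_on_def by blast
  then show ?thesis by (rule summable_on_subset_banach) auto
qed

lemma conservative_diag:
  assumes q: "conservative S q" and i: "i \<in> S"
  shows "q i i = - (\<Sum>\<^sub>\<infinity>j\<in>S - {i}. q i j)"
proof -
  have "(q i has_sum (q i i + (\<Sum>\<^sub>\<infinity>j\<in>S - {i}. q i j))) (insert i (S - {i}))"
    using conservative_summable[OF q i] by (intro has_sum_insert) auto
  moreover have "insert i (S - {i}) = S" using i by auto
  moreover have "(q i has_sum 0) S" using q i unfolding conservative_def by auto
  ultimately show ?thesis using has_sum_unique by fastforce
qed

lemma infsum_le_if_nn_integral_le: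
  fixes f :: "'a \<Rightarrow> real"
  assumes f: "f summable_on A" "\<And>j. j \<in> A \<Longrightarrow> 0 \<le> f j"
    and B: "(\<integral>\<^sup>+j. ennreal (f j) \<partial>count_space A) \<le> ennreal B" "0 \<le> B"
  shows "infsum f A \<le> B"
proof (rule has_sum_le_finite_sums)
  show "(f has_sum infsum f A) A" using f(1) by simp
  fix F assume F: "finite F" "F \<subseteq> A"
  have "ennreal (sum f F) = (\<Sum>j\<in>F. ennreal (f j))"
    using F f(2) by (intro sum_ennreal[symmetric]) auto
  also have "\<dots> = (\<integral>\<^sup>+j. ennreal (f j) \<partial>count_space F)"
    using F by (simp add: nn_integral_count_space_finite)
  also have "\<dots> = (\<integral>\<^sup>+j. ennreal (f j) * indicator F j \<partial>count_space UNIV)"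
    by (rule nn_integral_count_space_indicator) simp
  also have "\<dots> \<le> (\<integral>\<^sup>+j. ennreal (f j) * indicator A j \<partial>count_space UNIV)"
    using F by (intro nn_integral_mono) (auto split: split_indicator)
  also have "\<dots> = (\<integral>\<^sup>+j. ennreal (f j) \<partial>count_space A)"
    by (rule nn_integral_count_space_indicator[symmetric]) simp
  finally show "sum f F \<le> B"
    using B by (metis ennreal_le_iff order.trans)
qed

lemma uniformly_bounded_ratesE:
  assumes "uniformly_bounded_rates S Q" and cons: "\<And>z. conservative S (Q z)"
  obtains B where "\<And>z i. i \<in> S \<Longrightarrow> (\<Sum>\<^sub>\<infinity>j\<in>S - {i}. Q z i j) \<le> B"
proof
  define K where "K = (SUP i\<in>S. \<integral>\<^sup>+ j. (SUP z. ennreal (Q z i j)) \<partial>count_space (S - {i}))"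
  have K: "K = ennreal (enn2real K)"
    using assms(1) unfolding uniformly_bounded_rates_def K_def by (simp add: less_top)
  fix z i assume i: "i \<in> S"
  have "(\<integral>\<^sup>+j. ennreal (Q z i j) \<partial>count_space (S - {i})) \<le> (\<integral>\<^sup>+ j. (SUP z. ennreal (Q z i j)) \<partial>count_space (S - {i}))"
    by (intro nn_integral_mono SUP_upper) simp
  also have "\<dots> \<le> K"
    unfolding K_def using i by (rule SUP_upper)
  finally show "(\<Sum>\<^sub>\<infinity>j\<in>S - {i}. Q z i j) \<le> enn2real K"
    using conservative_summable[OF cons i] conservative_nonneg[OF cons i] K
    by (intro infsum_le_if_nn_integral_le) auto
qed

section \<open>The sample space \<open>nat \<Rightarrow> real\<close>\<close>

text \<open>The theorem fixes the sample space type \<open>nat \<Rightarrow> real\<close>; the noise stream is transported there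
  by interleaving holding times (even indices) and marks (odd indices).\<close>
definition stream_to_seq :: "(real \<times> real) stream \<Rightarrow> nat \<Rightarrow> real" where
  "stream_to_seq \<omega> n = (if even n then fst (\<omega> !! (n div 2)) else snd (\<omega> !! (n div 2)))"

definition seq_to_stream :: "(nat \<Rightarrow> real) \<Rightarrow> (real \<times> real) stream" where
  "seq_to_stream f = smap (\<lambda>n. (f (2 * n), f (2 * n + 1))) nats"

lemma seq_to_stream_stream_to_seq: "seq_to_stream (stream_to_seq \<omega>) = \<omega>"
proof -
  have "(\<lambda>n. (stream_to_seq \<omega> (2 * n), stream_to_seq \<omega> (2 * n + 1))) = snth \<omega>"
    by (auto simp: stream_to_seq_def fun_eq_iff)
  then show ?thesis unfolding seq_to_stream_def by (metis stream_smap_nats)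
qed

definition seq_noise :: "real \<Rightarrow> (nat \<Rightarrow> real) measure" where
  "seq_noise l = distr (noise l) (\<Pi>\<^sub>M i\<in>UNIV. borel) stream_to_seq"

lemma stream_to_seq_measurable: "stream_to_seq \<in> measurable (noise l) (\<Pi>\<^sub>M i\<in>UNIV. borel)"
  unfolding stream_to_seq_def
proof (rule measurable_PiM_single')
  fix n :: nat
  show "(\<lambda>\<omega>. if even n then fst (\<omega> !! (n div 2)) else snd (\<omega> !! (n div 2))) \<in> borel_measurable (noise l)"
    by (cases "even n") (simp_all add: noise_def)
qed auto

lemma seq_to_stream_measurable: "seq_to_stream \<in> measurable (\<Pi>\<^sub>M i\<in>UNIV. borel) (noise l)"
  unfolding noise_def
proof (rule measurable_stream_space2)
  fix n
  have "(\<lambda>f::nat \<Rightarrow> real. (f (2 * n), f (2 * n + 1))) \<in> measurable (\<Pi>\<^sub>M i\<in>UNIV. borel) (borel \<Otimes>\<^sub>M borel)"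
    by measurable
  moreover have "seq_to_stream f !! n = (f (2 * n), f (2 * n + 1))" for f
    by (simp add: seq_to_stream_def)
  ultimately show "(\<lambda>f. seq_to_stream f !! n) \<in> measurable (\<Pi>\<^sub>M i\<in>UNIV. borel) (tick l)"
    by (simp cong: measurable_cong_sets)
qed

lemma space_seq_noise[simp]: "space (seq_noise l) = UNIV"
  by (simp add: seq_noise_def space_PiM)

lemma sets_seq_noise[measurable_cong]: "sets (seq_noise l) = sets (\<Pi>\<^sub>M i\<in>UNIV. (borel :: real measure))"
  by (simp add: seq_noise_def)

context uniformization
begin

lemma prob_space_seq_noise: "prob_space (seq_noise lam)"
  unfolding seq_noise_def by (rule Noise.prob_space_distr[OF stream_to_seq_measurable])

lemma measure_seq_noise:
  assumes B: "B \<in> sets (noise lam)"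
  shows "measure (seq_noise lam) {f. seq_to_stream f \<in> B} = measure (noise lam) B"
proof -
  have "{f. seq_to_stream f \<in> B} = seq_to_stream -` B \<inter> space (\<Pi>\<^sub>M i\<in>UNIV. (borel :: real measure))"
    by (auto simp: space_PiM)
  moreover have "stream_to_seq -` (seq_to_stream -` B \<inter> space (\<Pi>\<^sub>M i\<in>UNIV. (borel :: real measure))) \<inter> space (noise lam) = B"
    by (auto simp: seq_to_stream_stream_to_seq space_PiM)
  ultimately show ?thesis
    unfolding seq_noise_def
    by (simp only: measure_distr[OF stream_to_seq_measurable measurable_sets[OF seq_to_stream_measurable B]])
qed

lemma transition_function_trans_prob:
  fixes F :: "nat \<Rightarrow> real \<Rightarrow> nat"
  assumes F[measurable]: "\<And>i. F i \<in> measurable borel (count_space UNIV)"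
    and F_closed: "\<And>i u. i \<in> S \<Longrightarrow> F i u \<in> S" and c: "c \<in> S"
    and rates: "\<And>i j. i \<in> S \<Longrightarrow> j \<in> S \<Longrightarrow> lam * (measure unif_mark {u. F i u = j} - (if i = j then 1 else 0)) = q i j"
  shows "transition_function S q (trans_prob F c)"
  unfolding transition_function_def
proof (intro conjI ballI allI impI)
  show "0 \<le> trans_prob F c i j t" for i j t
    by (simp add: trans_prob_def)
  show "((\<lambda>j. trans_prob F c i j t) has_sum 1) S" if "i \<in> S" for i t
    by (rule trans_prob_row_sum[OF F F_closed that c])
  show "((\<lambda>k. trans_prob F c i k s * trans_prob F c k j t) has_sum trans_prob F c i j (s + t)) S"
    if "i \<in> S" "0 \<le> s" "0 \<le> t" for i j s t
    by (rule trans_prob_Chapman_Kolmogorov[OF F F_closed that(1) c that(2,3)])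
  show "trans_prob F c i j 0 = (if i = j then 1 else 0)" for i j
    by (rule trans_prob_0)
  show "(trans_prob F c i j has_real_derivative q i j) (at_right 0)" if "i \<in> S" "j \<in> S" for i j
    using trans_prob_has_derivative[where F=F, OF F, of c i j] rates[OF that] by simp
qed

lemma is_ctmc_chain_path:
  fixes F :: "nat \<Rightarrow> real \<Rightarrow> nat"
  assumes F[measurable]: "\<And>i. F i \<in> measurable borel (count_space UNIV)"
    and F_closed: "\<And>i u. i \<in> S \<Longrightarrow> F i u \<in> S" and i0: "i0 \<in> S"
    and rates: "\<And>i j. i \<in> S \<Longrightarrow> j \<in> S \<Longrightarrow> lam * (measure unif_mark {u. F i u = j} - (if i = j then 1 else 0)) = q i j"
  shows "is_ctmc (seq_noise lam) S q i0 (\<lambda>t f. chain_path F i0 i0 (seq_to_stream f) t)"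
proof -
  have "(\<lambda>f. chain_path F i0 i0 (seq_to_stream f) t) \<in> measurable (seq_noise lam) (count_space UNIV)" for t
    using measurable_compose[OF seq_to_stream_measurable chain_path_measurable[OF F]]
    by (simp add: measurable_cong_sets[OF sets_seq_noise refl])
  moreover have "measure (seq_noise lam) {f \<in> space (seq_noise lam). \<forall>k\<le>n. chain_path F i0 i0 (seq_to_stream f) (ts k) = js k} =
       (if js 0 = i0 then 1 else 0) * (\<Prod>k<n. trans_prob F i0 (js k) (js (Suc k)) (ts (Suc k) - ts k))"
    if "ts 0 = 0" "\<forall>k<n. ts k < ts (Suc k)" for n ts js
    using measure_seq_noise[of "{\<omega>. \<forall>k\<le>n. chain_path F i0 i0 \<omega> (ts k) = js k}"] measure_finite_dim[OF F that]
    by (simp add: sets_Collect_noise)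
  moreover have "chain_path F i0 i0 (seq_to_stream f) t \<in> S" for f t
    by (rule chain_path_in[OF F_closed i0 i0])
  ultimately show ?thesis
    unfolding is_ctmc_def
    using prob_space_seq_noise chain_path_right_const transition_function_trans_prob[OF F F_closed i0 rates]
    by (intro conjI allI impI ballI exI[of _ "trans_prob F i0"]) simp_all
qed

end

section \<open>The coupling\<close>

lemma ctmc_coupling:
  fixes q q' :: "nat \<Rightarrow> nat \<Rightarrow> real"
  assumes cons: "conservative S q" "conservative S q'" and i0: "i0 \<in> S"
    and bounded: "\<And>i. i \<in> S \<Longrightarrow> (\<Sum>\<^sub>\<infinity>j\<in>S - {i}. q i j) \<le> B" "\<And>i. i \<in> S \<Longrightarrow> (\<Sum>\<^sub>\<infinity>j\<in>S - {i}. q' i j) \<le> B"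
  shows "\<exists>(M :: (nat \<Rightarrow> real) measure) Y Y'. is_ctmc M S q i0 Y \<and> is_ctmc M S q' i0 Y' \<and>
    (\<forall>s\<ge>0. measure M {\<omega>\<in>space M. Y s \<omega> \<noteq> Y' s \<omega>} \<le> s * Q_dist S q q')"
proof -
  define lam where "lam = max B 0 + 1"
  have lam: "0 < lam" "B \<le> lam" by (auto simp: lam_def)
  interpret uniformization lam by unfold_locales (fact lam)
  interpret rate_pair q q' S lam
    using cons bounded lam by unfold_locales (auto intro: order.trans conservative_nonneg conservative_summable)
  interpret swapped: rate_pair q' q S lam by (rule swap)
  define F where "F = jump_target q q' S lam"
  define F' where "F' = jump_target q' q S lam"
  interpret path_coupling lam F F' S i0 "Q_dist S q q' / lam"
  proof unfold_locales
    fix k assume k: "k \<in> S"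
    have "measure unif_mark {u. F k u \<noteq> F' k u} \<le> (\<Sum>\<^sub>\<infinity>j\<in>S - {k}. \<bar>q k j - q' k j\<bar>) / lam"
      unfolding F_def F'_def by (rule measure_jump_targets_differ[OF k])
    also have "\<dots> \<le> Q_dist S q q' / lam"
      using lam(1) by (intro divide_right_mono row_dist_le_Q_dist[OF k]) simp
    finally show "measure unif_mark {u. F k u \<noteq> F' k u} \<le> Q_dist S q q' / lam" .
  qed (auto simp: F_def F'_def jump_target_in i0)
  have "is_ctmc (seq_noise lam) S q i0 (\<lambda>t f. chain_path F i0 i0 (seq_to_stream f) t)"
    using jump_target_in jump_target_rates conservative_diag[OF cons(1)]
    by (intro is_ctmc_chain_path) (simp_all add: F_def i0)
  moreover have "is_ctmc (seq_noise lam) S q' i0 (\<lambda>t f. chain_path F' i0 i0 (seq_to_stream f) t)"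
    using swapped.jump_target_in swapped.jump_target_rates conservative_diag[OF cons(2)]
    by (intro is_ctmc_chain_path) (simp_all add: F'_def i0)
  moreover have "measure (seq_noise lam) {f. chain_path F i0 i0 (seq_to_stream f) s \<noteq> chain_path F' i0 i0 (seq_to_stream f) s}
      \<le> s * Q_dist S q q'" if "0 \<le> s" for s
    using measure_seq_noise[OF mismatch_measurable] mismatch_prob_le[OF i0 that] lam
    by (simp add: mismatch_prob_def mult.commute)
  ultimately show ?thesis
    by (intro exI[of _ "seq_noise lam"] exI[of _ "\<lambda>t f. chain_path F i0 i0 (seq_to_stream f) t"]
        exI[of _ "\<lambda>t f. chain_path F' i0 i0 (seq_to_stream f) t"]) simp
qed

lemma time_average_le:
  fixes h :: "real \<Rightarrow> real"
  assumes h: "\<And>s. 0 \<le> s \<Longrightarrow> h s \<le> s * D" and D: "0 \<le> D" and t: "0 < t"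
  shows "(1 / t) * (\<integral>s\<in>{0..t}. h s \<partial>lborel) \<le> t * D"
proof -
  have "(\<integral>s\<in>{0..t}. h s \<partial>lborel) \<le> t * (t * D)"
  proof (cases "set_integrable lborel {0..t} h")
    case True
    have "set_integrable lborel {0..t} (\<lambda>_. t * D)"
      unfolding set_integrable_def by (intro integrable_scaleR_left integrable_real_indicator) (use t in auto)
    moreover have "h s \<le> t * D" if "s \<in> {0..t}" for s
      using h[of s] mult_right_mono[of s t D] that D by auto
    ultimately have "(\<integral>s\<in>{0..t}. h s \<partial>lborel) \<le> (\<integral>s\<in>{0..t}. t * D \<partial>lborel)"
      by (intro set_integral_mono True)
    then show ?thesis using t by (subst (asm) set_integral_const) auto
  next
    case False
    then have "(\<integral>s\<in>{0..t}. h s \<partial>lborel) = 0"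
      unfolding set_integrable_def set_lebesgue_integral_def by (rule not_integrable_integral_eq)
    then show ?thesis using t D by simp
  qed
  then show ?thesis using t by (simp add: field_simps)
qed

lemma ctmc_coupling_time_average:
  fixes q q' :: "nat \<Rightarrow> nat \<Rightarrow> real"
  assumes cons: "conservative S q" "conservative S q'" and i0: "i0 \<in> S"
    and bounded: "\<And>i. i \<in> S \<Longrightarrow> (\<Sum>\<^sub>\<infinity>j\<in>S - {i}. q i j) \<le> B" "\<And>i. i \<in> S \<Longrightarrow> (\<Sum>\<^sub>\<infinity>j\<in>S - {i}. q' i j) \<le> B"
  shows "\<exists>(M :: (nat \<Rightarrow> real) measure) Y Y'. is_ctmc M S q i0 Y \<and> is_ctmc M S q' i0 Y' \<and>
    (\<forall>t>0. (1 / t) * (\<integral>s\<in>{0..t}. measure M {\<omega>\<in>space M. Y s \<omega> \<noteq> Y' s \<omega>} \<partial>lborel) \<le> t * Q_dist S q q')"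
proof -
  obtain M :: "(nat \<Rightarrow> real) measure" and Y Y' where Y: "is_ctmc M S q i0 Y" and Y': "is_ctmc M S q' i0 Y'"
    and close: "\<forall>s\<ge>0. measure M {\<omega>\<in>space M. Y s \<omega> \<noteq> Y' s \<omega>} \<le> s * Q_dist S q q'"
    using ctmc_coupling[OF cons i0 bounded] by blast
  have "0 \<le> Q_dist S q q'"
    using close measure_nonneg[of M] by (metis mult_1 order.trans zero_le_one)
  then show ?thesis
    using Y Y' close by (blast intro: time_average_le)
qed

theorem corollary3p2:
  fixes N :: enat
    and Q :: "real^'d \<Rightarrow> nat \<Rightarrow> nat \<Rightarrow> real"
  assumes A2_cons: "\<And>z. conservative (state_space N) (Q z)"
    and A2_irr: "\<And>z. irreducible_Q (state_space N) (Q z)"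
    and A2_bound: "uniformly_bounded_rates (state_space N) Q"
  shows "\<forall>x y i0. i0 \<in> state_space N \<longrightarrow>
    (\<exists>(M :: (nat \<Rightarrow> real) measure) Y Y'.
       is_ctmc M (state_space N) (Q x) i0 Y \<and>
       is_ctmc M (state_space N) (Q y) i0 Y' \<and>
       (\<forall>t>0. (1 / t) * (\<integral>s\<in>{0..t}. measure M {\<omega>\<in>space M. Y s \<omega> \<noteq> Y' s \<omega>} \<partial>lborel)
                \<le> t * Q_dist (state_space N) (Q x) (Q y)))"
proof -
  obtain B where "\<And>z i. i \<in> state_space N \<Longrightarrow> (\<Sum>\<^sub>\<infinity>j\<in>state_space N - {i}. Q z i j) \<le> B"
    using uniformly_bounded_ratesE[OF A2_bound A2_cons] by blast
  then show ?thesis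
    by (intro allI impI ctmc_coupling_time_average A2_cons)
qed

end
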